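(* Let $R$ be a finitely generated standard algebra. Assume that for every sufficiently large integer $d$, the set of all finitely generated homogeneous right ideals $I$ of $R$ with $m(I)\le d$ forms a rate filtration. Then $R$ is projective (right) coherent.
   Context: $R$ standard: graded, $R_0=k$, generated by $R_1$, $R_+=\bigoplus_{i>0}R_i$. $R$ is projective coherent if the kernel of every homogeneous homomorphism between finitely generated graded free right $R$-modules is finitely generated. For a homogeneous right ideal $J$, $m(J)$ is the maximal degree of a minimal homogeneous generator. A rate filtration is a set $\mathbf F$ of finitely generated homogeneous right ideals with $0,R_+\in\mathbf F$ such that for every $0\ne I\in\mathbf F$ there exist $J\in\mathbf F$, $J\ne I$, and a homogeneous $x\in I$ with $I=J+xR$, $m(J)\le m(I)$, and $\{a\in R: xa\in J\}\in\mathbf F$. *)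

theory Defs
  imports Main
begin

text \<open>A graded ring is a type 'r :: ring_1 together with a family G :: nat => 'r set
of homogeneous components G i = R_i.\<close>

definition add_closure :: "'r::ring_1 set \<Rightarrow> 'r set" where
  "add_closure S = {sum_list xs | xs. set xs \<subseteq> S}"

definition is_grading :: "(nat \<Rightarrow> 'r::ring_1 set) \<Rightarrow> bool" where
  "is_grading G \<longleftrightarrow>
     (\<forall>i. 0 \<in> G i \<and> (\<forall>x\<in>G i. \<forall>y\<in>G i. x + y \<in> G i) \<and> (\<forall>x\<in>G i. - x \<in> G i)) \<and>
     (\<forall>i j. \<forall>x\<in>G i. \<forall>y\<in>G j. x * y \<in> G (i + j)) \<and>
     1 \<in> G 0 \<and>
     (\<forall>x. \<exists>!c. (\<forall>i. c i \<in> G i) \<and> finite {i. c i \<noteq> 0} \<and> x = (\<Sum>i\<in>{i. c i \<noteq> 0}. c i))"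

definition comp :: "(nat \<Rightarrow> 'r::ring_1 set) \<Rightarrow> nat \<Rightarrow> 'r \<Rightarrow> 'r" where
  "comp G d x = (THE c. (\<forall>i. c i \<in> G i) \<and> finite {i. c i \<noteq> 0} \<and> x = (\<Sum>i\<in>{i. c i \<noteq> 0}. c i)) d"

text \<open>Standard algebra: graded, R_0 = k a field (central, so R is a k-algebra),
generated by R_1.  Finitely generated: R_1 is finite dimensional over R_0.\<close>
definition standard_algebra :: "(nat \<Rightarrow> 'r::ring_1 set) \<Rightarrow> bool" where
  "standard_algebra G \<longleftrightarrow> is_grading G \<and>
     (\<forall>a\<in>G 0. \<forall>x. a * x = x * a) \<and>
     (\<forall>a\<in>G 0. a \<noteq> 0 \<longrightarrow> (\<exists>b\<in>G 0. a * b = 1)) \<and>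
     (\<forall>n. G (Suc n) = add_closure {a * b | a b. a \<in> G n \<and> b \<in> G 1})"

definition fg_standard_algebra :: "(nat \<Rightarrow> 'r::ring_1 set) \<Rightarrow> bool" where
  "fg_standard_algebra G \<longleftrightarrow> standard_algebra G \<and>
     (\<exists>S. finite S \<and> S \<subseteq> G 1 \<and>
        G 1 = {sum_list (map (\<lambda>(c, s). c * s) ps) | ps. set ps \<subseteq> G 0 \<times> S})"

definition homogeneous :: "(nat \<Rightarrow> 'r::ring_1 set) \<Rightarrow> 'r \<Rightarrow> bool" where
  "homogeneous G x \<longleftrightarrow> (\<exists>d. x \<in> G d)"

definition hdeg :: "(nat \<Rightarrow> 'r::ring_1 set) \<Rightarrow> 'r \<Rightarrow> nat" where
  "hdeg G x = (LEAST d. x \<in> G d)"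

definition rideal_gen :: "'r::ring_1 set \<Rightarrow> 'r set" where
  "rideal_gen X = {sum_list (map (\<lambda>(x, r). x * r) ps) | ps. set ps \<subseteq> X \<times> UNIV}"

definition right_ideal :: "'r::ring_1 set \<Rightarrow> bool" where
  "right_ideal I \<longleftrightarrow> 0 \<in> I \<and> (\<forall>x\<in>I. \<forall>y\<in>I. x + y \<in> I) \<and> (\<forall>x\<in>I. - x \<in> I) \<and>
     (\<forall>x\<in>I. \<forall>r. x * r \<in> I)"

definition hom_right_ideal :: "(nat \<Rightarrow> 'r::ring_1 set) \<Rightarrow> 'r set \<Rightarrow> bool" where
  "hom_right_ideal G I \<longleftrightarrow> right_ideal I \<and> (\<forall>x\<in>I. \<forall>d. comp G d x \<in> I)"

definition fg_hom_right_ideal :: "(nat \<Rightarrow> 'r::ring_1 set) \<Rightarrow> 'r set \<Rightarrow> bool" where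
  "fg_hom_right_ideal G I \<longleftrightarrow> hom_right_ideal G I \<and> (\<exists>X. finite X \<and> I = rideal_gen X)"

definition min_hom_gens :: "(nat \<Rightarrow> 'r::ring_1 set) \<Rightarrow> 'r set \<Rightarrow> 'r set \<Rightarrow> bool" where
  "min_hom_gens G I X \<longleftrightarrow> finite X \<and> (\<forall>x\<in>X. homogeneous G x) \<and> rideal_gen X = I \<and>
     (\<forall>Y. Y \<subset> X \<longrightarrow> rideal_gen Y \<noteq> I)"

text \<open>m(J): maximal degree of a minimal homogeneous generator (0 for the zero ideal).\<close>
definition mdeg :: "(nat \<Rightarrow> 'r::ring_1 set) \<Rightarrow> 'r set \<Rightarrow> nat" where
  "mdeg G J = Max (insert 0 (hdeg G ` (SOME X. min_hom_gens G J X)))"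

definition Rplus :: "(nat \<Rightarrow> 'r::ring_1 set) \<Rightarrow> 'r set" where
  "Rplus G = {x. comp G 0 x = 0}"

definition rate_filtration :: "(nat \<Rightarrow> 'r::ring_1 set) \<Rightarrow> 'r set set \<Rightarrow> bool" where
  "rate_filtration G F \<longleftrightarrow>
     (\<forall>I\<in>F. fg_hom_right_ideal G I) \<and> {0} \<in> F \<and> Rplus G \<in> F \<and>
     (\<forall>I\<in>F. I \<noteq> {0} \<longrightarrow>
        (\<exists>J\<in>F. \<exists>x. J \<noteq> I \<and> homogeneous G x \<and> x \<in> I \<and>
           I = {j + x * r | j r. j \<in> J} \<and> mdeg G J \<le> mdeg G I \<and>
           {a. x * a \<in> J} \<in> F))"

definition Gz :: "(nat \<Rightarrow> 'r::ring_1 set) \<Rightarrow> int \<Rightarrow> 'r set" where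
  "Gz G k = (if k < 0 then {0} else G (nat k))"

text \<open>A finitely generated graded free right module is
R(-a_0) + ... + R(-a_{n-1}), realised as vectors (nat => 'r, zero outside {..<n}).
A homogeneous homomorphism of degree e into R(-b_0)+...+R(-b_{m-1}) is (right R-linear, hence)
left multiplication by an m x n matrix M with M j i of degree a i - b j + e.\<close>
definition projective_coherent :: "(nat \<Rightarrow> 'r::ring_1 set) \<Rightarrow> bool" where
  "projective_coherent G \<longleftrightarrow>
     (\<forall>(n::nat) (m::nat) (a::nat \<Rightarrow> int) (b::nat \<Rightarrow> int) (e::int) (M::nat \<Rightarrow> nat \<Rightarrow> 'r).
        (\<forall>j<m. \<forall>i<n. M j i \<in> Gz G (a i - b j + e)) \<longrightarrow>
        (let K = {v::nat \<Rightarrow> 'r. (\<forall>i\<ge>n. v i = 0) \<and> (\<forall>j<m. (\<Sum>i<n. M j i * v i) = 0)} in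
         \<exists>ws::(nat \<Rightarrow> 'r) list. set ws \<subseteq> K \<and>
           K = {(\<lambda>i. \<Sum>k<length ws. (ws ! k) i * r k) | r. True}))"

end

theory Submission
  imports Defs
begin

text \<open>Say that an ideal has finitely generated syzygies if every homogeneous tuple generating it
  has a syzygy module generated by finitely many homogeneous vectors; comparing two generating
  tuples through coefficient matrices shows that one tuple suffices.  Given a homogeneous tuple
  generating \<open>I\<close>, pick \<open>d \<ge> m(I)\<close> so large that the ideals with \<open>m \<le> d\<close> form a rate filtration
  \<open>F\<close>.  Every \<open>I \<noteq> 0\<close> in \<open>F\<close> is \<open>J + xR\<close> with \<open>J, J : x \<in> F\<close>, and the syzygies of (generators
  of \<open>J\<close>, \<open>x\<close>) are those of \<open>J\<close> together with one vector per generator of \<open>J : x\<close>; so \<open>I\<close> has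
  finitely generated syzygies once \<open>J\<close> has.  This descent terminates: ideals of \<open>F\<close> are
  generated in degrees \<open>\<le> d\<close>, hence a proper inclusion \<open>J \<subset> I\<close> is already proper on the
  finite-dimensional \<open>R\<^sub>0\<close>-space \<open>R\<^sub>\<le>\<^sub>d\<close>, where it strictly enlarges the set of pivots of a
  row echelon form.  Finally, the kernel of a homogeneous matrix is computed row by row: if \<open>W\<close>
  generates the kernel of the first \<open>m\<close> rows, the kernel of the first \<open>m + 1\<close> rows is \<open>W\<close>
  applied to the syzygies of the tuple (row \<open>m + 1\<close>)\<open>\<cdot>W\<close>.\<close>

section \<open>Graded components\<close>

locale graded_ring =
  fixes G :: "nat \<Rightarrow> 'r::ring_1 set"
  assumes grading: "is_grading G"
begin

lemma G_zero: "0 \<in> G i"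
  using grading unfolding is_grading_def by blast

lemma G_add: "x \<in> G i \<Longrightarrow> y \<in> G i \<Longrightarrow> x + y \<in> G i"
  using grading unfolding is_grading_def by blast

lemma G_uminus: "x \<in> G i \<Longrightarrow> - x \<in> G i"
  using grading unfolding is_grading_def by blast

lemma G_mult: "x \<in> G i \<Longrightarrow> y \<in> G j \<Longrightarrow> x * y \<in> G (i + j)"
  using grading unfolding is_grading_def by blast

lemma G_one: "1 \<in> G 0"
  using grading unfolding is_grading_def by blast

definition decomposition :: "'r \<Rightarrow> (nat \<Rightarrow> 'r) \<Rightarrow> bool" where
  "decomposition x c \<longleftrightarrow>
     (\<forall>i. c i \<in> G i) \<and> finite {i. c i \<noteq> 0} \<and> x = (\<Sum>i\<in>{i. c i \<noteq> 0}. c i)"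

lemma ex1_decomposition: "\<exists>!c. decomposition x c"
  using grading unfolding is_grading_def decomposition_def by blast

lemma decomposition_comp: "decomposition x (\<lambda>d. comp G d x)"
proof -
  have "(\<lambda>d. comp G d x) = (THE c. decomposition x c)"
    by (simp add: comp_def decomposition_def)
  with theI'[OF ex1_decomposition] show ?thesis by simp
qed

lemma comp_in_G: "comp G d x \<in> G d"
  using decomposition_comp unfolding decomposition_def by blast

lemma finite_comp_support: "finite {d. comp G d x \<noteq> 0}"
  using decomposition_comp unfolding decomposition_def by blast

lemma comp_unique:
  assumes "\<And>i. c i \<in> G i" "finite A" "{i. c i \<noteq> 0} \<subseteq> A" "x = (\<Sum>i\<in>A. c i)"
  shows "comp G d x = c d"
proof -
  have "(\<Sum>i\<in>A. c i) = (\<Sum>i\<in>{i. c i \<noteq> 0}. c i)"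
    by (rule sum.mono_neutral_right) (use assms in auto)
  with assms finite_subset have "decomposition x c"
    unfolding decomposition_def by auto
  with ex1_decomposition decomposition_comp have "(\<lambda>d. comp G d x) = c"
    by blast
  then show ?thesis by (rule fun_cong)
qed

lemma sum_comp:
  assumes "finite A" "{d. comp G d x \<noteq> 0} \<subseteq> A"
  shows "(\<Sum>d\<in>A. comp G d x) = x"
proof -
  have "(\<Sum>d\<in>A. comp G d x) = (\<Sum>d\<in>{d. comp G d x \<noteq> 0}. comp G d x)"
    by (rule sum.mono_neutral_right) (use assms in auto)
  also have "\<dots> = x"
    using decomposition_comp unfolding decomposition_def by simp
  finally show ?thesis .
qed

lemma comp_homogeneous: "x \<in> G e \<Longrightarrow> comp G d x = (if d = e then x else 0)"
  by (rule comp_unique[where A="{e}"]) (auto simp: G_zero)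

lemma comp_add: "comp G d (x + y) = comp G d x + comp G d y"
proof (rule comp_unique)
  let ?A = "{d. comp G d x \<noteq> 0} \<union> {d. comp G d y \<noteq> 0}"
  show "finite ?A"
    using finite_comp_support by simp
  then show "x + y = (\<Sum>i\<in>?A. comp G i x + comp G i y)"
    using sum_comp[of ?A x] sum_comp[of ?A y] by (simp add: sum.distrib)
qed (auto intro: G_add comp_in_G)

lemma comp_zero: "comp G d 0 = 0"
  using comp_add[of d 0 0] by simp

lemma comp_sum: "comp G d (sum f A) = (\<Sum>a\<in>A. comp G d (f a))"
  by (induction A rule: infinite_finite_induct) (auto simp: comp_zero comp_add)

lemma comp_mult_left:
  assumes y: "y \<in> G e"
  shows "comp G d (y * x) = (if e \<le> d then y * comp G (d - e) x else 0)"
proof (rule comp_unique)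
  let ?S = "{i. comp G i x \<noteq> 0}"
  let ?c = "\<lambda>j. if e \<le> j then y * comp G (j - e) x else 0"
  show "?c i \<in> G i" for i
    using G_mult[OF y comp_in_G, of "i - e" x] G_zero[of i] by (cases "e \<le> i") auto
  show "finite ((\<lambda>i. i + e) ` ?S)"
    using finite_comp_support by simp
  show "{i. ?c i \<noteq> 0} \<subseteq> (\<lambda>i. i + e) ` ?S"
  proof
    fix j assume "j \<in> {i. ?c i \<noteq> 0}"
    then have "e \<le> j" "comp G (j - e) x \<noteq> 0"
      by (auto split: if_splits)
    then show "j \<in> (\<lambda>i. i + e) ` ?S"
      by (intro image_eqI[of _ _ "j - e"]) auto
  qed
  have "y * x = y * (\<Sum>i\<in>?S. comp G i x)"
    using sum_comp[OF finite_comp_support, of x x] by simp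
  also have "\<dots> = (\<Sum>i\<in>?S. y * comp G i x)"
    by (rule sum_distrib_left)
  also have "\<dots> = (\<Sum>j\<in>(\<lambda>i. i + e) ` ?S. ?c j)"
    by (subst sum.reindex) (auto simp: inj_on_def)
  finally show "y * x = (\<Sum>j\<in>(\<lambda>i. i + e) ` ?S. ?c j)" .
qed

lemma Gz_zero: "0 \<in> Gz G k"
  by (simp add: Gz_def G_zero)

lemma Gz_one: "1 \<in> Gz G 0"
  by (simp add: Gz_def G_one)

lemma Gz_of_nat: "Gz G (int n) = G n"
  by (simp add: Gz_def)

lemma Gz_add: "x \<in> Gz G k \<Longrightarrow> y \<in> Gz G k \<Longrightarrow> x + y \<in> Gz G k"
  by (auto simp: Gz_def G_add split: if_splits)

lemma Gz_uminus: "x \<in> Gz G k \<Longrightarrow> - x \<in> Gz G k"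
  by (auto simp: Gz_def G_uminus split: if_splits)

lemma Gz_diff: "x \<in> Gz G k \<Longrightarrow> y \<in> Gz G k \<Longrightarrow> x - y \<in> Gz G k"
  using Gz_add Gz_uminus by (metis diff_conv_add_uminus)

lemma Gz_sum: "(\<And>a. a \<in> A \<Longrightarrow> f a \<in> Gz G k) \<Longrightarrow> sum f A \<in> Gz G k"
  by (induction A rule: infinite_finite_induct) (auto simp: Gz_zero Gz_add)

lemma Gz_mult:
  assumes x: "x \<in> Gz G p" and y: "y \<in> Gz G q"
  shows "x * y \<in> Gz G (p + q)"
proof (cases "p < 0 \<or> q < 0")
  case True
  then have "x = 0 \<or> y = 0"
    using x y by (auto simp: Gz_def)
  then show ?thesis
    using Gz_zero by auto
next
  case False
  then have "x * y \<in> G (nat p + nat q)"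
    using x y by (auto simp: Gz_def intro: G_mult)
  with False show ?thesis
    by (simp add: Gz_def nat_add_distrib)
qed

definition comp_int :: "int \<Rightarrow> 'r \<Rightarrow> 'r" where
  "comp_int k x = (if k < 0 then 0 else comp G (nat k) x)"

lemma comp_int_in_Gz: "comp_int k x \<in> Gz G k"
  by (simp add: comp_int_def Gz_def comp_in_G)

lemma comp_int_sum: "comp_int k (sum f A) = (\<Sum>a\<in>A. comp_int k (f a))"
  by (simp add: comp_int_def comp_sum)

lemma comp_int_homogeneous: "x \<in> Gz G k \<Longrightarrow> comp_int k x = x"
  by (auto simp: comp_int_def Gz_def comp_homogeneous)

lemma comp_int_mult_left:
  assumes g: "g \<in> Gz G c"
  shows "comp_int k (g * a) = g * comp_int (k - c) a"
proof (cases "c < 0")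
  case True
  with g show ?thesis
    by (simp add: Gz_def comp_int_def comp_zero)
next
  case False
  with g comp_mult_left[of g "nat c" "nat k" a] show ?thesis
    by (auto simp: Gz_def comp_int_def nat_diff_distrib)
qed

lemma homogeneous_combination:
  assumes y: "y \<in> Gz G \<gamma>" and g: "\<And>i. i < t \<Longrightarrow> g i \<in> Gz G (c i)"
    and ya: "y = (\<Sum>i<t. g i * a i)"
  shows "y = (\<Sum>i<t. g i * comp_int (\<gamma> - c i) (a i))"
proof -
  have "y = comp_int \<gamma> y"
    using comp_int_homogeneous[OF y] by simp
  also have "\<dots> = (\<Sum>i<t. g i * comp_int (\<gamma> - c i) (a i))"
    unfolding ya comp_int_sum by (rule sum.cong) (auto simp: comp_int_mult_left g)
  finally show ?thesis .
qed

end

section \<open>Right ideals and submodules of free modules\<close>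

lemma right_ideal_rideal_gen: "right_ideal (rideal_gen X)"
proof -
  let ?f = "\<lambda>(x::'a, r). x * r"
  have mult: "sum_list (map ?f ps) * s = sum_list (map ?f (map (\<lambda>(x, r). (x, r * s)) ps))"
    for ps :: "('a \<times> 'a) list" and s
    by (induction ps) (auto simp: distrib_right mult.assoc)
  have "0 \<in> rideal_gen X"
    unfolding rideal_gen_def by (intro CollectI exI[of _ "[]"]) simp
  moreover have "a + b \<in> rideal_gen X" if a: "a \<in> rideal_gen X" and b: "b \<in> rideal_gen X" for a b
  proof -
    obtain ps where "a = sum_list (map ?f ps)" "set ps \<subseteq> X \<times> UNIV"
      using a unfolding rideal_gen_def by blast
    moreover obtain qs where "b = sum_list (map ?f qs)" "set qs \<subseteq> X \<times> UNIV"
      using b unfolding rideal_gen_def by blast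
    ultimately show ?thesis
      unfolding rideal_gen_def by (intro CollectI exI[of _ "ps @ qs"]) auto
  qed
  moreover have mult_closed: "a * s \<in> rideal_gen X" if a: "a \<in> rideal_gen X" for a s
  proof -
    obtain ps where ps: "a = sum_list (map ?f ps)" "set ps \<subseteq> X \<times> UNIV"
      using a unfolding rideal_gen_def by blast
    have "a * s = sum_list (map ?f (map (\<lambda>(x, r). (x, r * s)) ps))"
      unfolding ps(1) by (rule mult)
    moreover have "set (map (\<lambda>(x, r). (x, r * s)) ps) \<subseteq> X \<times> UNIV"
      using ps(2) by auto
    ultimately show ?thesis
      unfolding rideal_gen_def by blast
  qed
  moreover have "- a \<in> rideal_gen X" if "a \<in> rideal_gen X" for a
    using mult_closed[OF that, of "- 1"] by simp
  ultimately show ?thesis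
    unfolding right_ideal_def by blast
qed

lemma right_ideal_sum: "right_ideal I \<Longrightarrow> (\<And>a. a \<in> A \<Longrightarrow> f a \<in> I) \<Longrightarrow> sum f A \<in> I"
  unfolding right_ideal_def by (induction A rule: infinite_finite_induct) auto

lemma rideal_gen_base: "x \<in> X \<Longrightarrow> x \<in> rideal_gen X"
  unfolding rideal_gen_def by (intro CollectI exI[of _ "[(x, 1)]"]) auto

lemma rideal_gen_minimal:
  assumes "right_ideal I" "X \<subseteq> I"
  shows "rideal_gen X \<subseteq> I"
proof
  fix y assume "y \<in> rideal_gen X"
  then obtain ps where ps: "y = sum_list (map (\<lambda>(x, r). x * r) ps)" "set ps \<subseteq> X \<times> UNIV"
    unfolding rideal_gen_def by blast
  have "set ps \<subseteq> X \<times> UNIV \<Longrightarrow> sum_list (map (\<lambda>(x, r). x * r) ps) \<in> I"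
    by (induction ps) (use assms in \<open>auto simp: right_ideal_def\<close>)
  with ps show "y \<in> I" by simp
qed

lemma right_ideal_tuple_combinations: "right_ideal (range (\<lambda>a. \<Sum>i<(t::nat). g i * a i))"
  (is "right_ideal ?I")
  unfolding right_ideal_def
proof (intro conjI ballI allI)
  show "0 \<in> ?I"
    by (rule range_eqI[of _ _ "\<lambda>_. 0"]) simp
  show "x + y \<in> ?I" if xy: "x \<in> ?I" "y \<in> ?I" for x y
  proof -
    obtain a b where "x = (\<Sum>i<t. g i * a i)" "y = (\<Sum>i<t. g i * b i)"
      using xy by blast
    then show ?thesis
      by (intro range_eqI[of _ _ "\<lambda>i. a i + b i"]) (simp add: sum.distrib distrib_left)
  qed
  show "- x \<in> ?I" if x: "x \<in> ?I" for x
  proof -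
    obtain a where "x = (\<Sum>i<t. g i * a i)"
      using x by blast
    then show ?thesis
      by (intro range_eqI[of _ _ "\<lambda>i. - a i"]) (simp add: sum_negf)
  qed
  show "x * r \<in> ?I" if x: "x \<in> ?I" for x r
  proof -
    obtain a where "x = (\<Sum>i<t. g i * a i)"
      using x by blast
    then show ?thesis
      by (intro range_eqI[of _ _ "\<lambda>i. a i * r"]) (simp add: sum_distrib_right mult.assoc)
  qed
qed

lemma mem_rideal_gen_tuple:
  "y \<in> rideal_gen (g ` {..<(t::nat)}) \<longleftrightarrow> (\<exists>a. y = (\<Sum>i<t. g i * a i))"
proof
  have "g j \<in> range (\<lambda>a. \<Sum>i<t. g i * a i)" if "j < t" for j
  proof (rule range_eqI[of _ _ "\<lambda>i. if i = j then 1 else 0"])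
    have "(\<Sum>i<t. g i * (if i = j then 1 else 0)) = (\<Sum>i<t. if i = j then g i else 0)"
      by (rule sum.cong) auto
    with that show "g j = (\<Sum>i<t. g i * (if i = j then 1 else 0))"
      by simp
  qed
  then have "rideal_gen (g ` {..<t}) \<subseteq> range (\<lambda>a. \<Sum>i<t. g i * a i)"
    by (intro rideal_gen_minimal right_ideal_tuple_combinations) auto
  then show "y \<in> rideal_gen (g ` {..<t}) \<Longrightarrow> \<exists>a. y = (\<Sum>i<t. g i * a i)"
    by blast
next
  assume "\<exists>a. y = (\<Sum>i<t. g i * a i)"
  then obtain a where a: "y = (\<Sum>i<t. g i * a i)" by blast
  have R: "right_ideal (rideal_gen (g ` {..<t}))"
    by (rule right_ideal_rideal_gen)
  have "g i * a i \<in> rideal_gen (g ` {..<t})" if "i < t" for i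
    using R rideal_gen_base[of "g i"] that unfolding right_ideal_def by blast
  then show "y \<in> rideal_gen (g ` {..<t})"
    unfolding a by (intro right_ideal_sum[OF R]) auto
qed

lemma rideal_gen_fun_upd:
  fixes f :: "nat \<Rightarrow> 'r::ring_1"
  shows "rideal_gen ((f(s := x)) ` {..<Suc s}) = {j + x * r | j r. j \<in> rideal_gen (f ` {..<s})}"
proof -
  have split: "(\<Sum>i<Suc s. (f(s := x)) i * a i) = (\<Sum>i<s. f i * a i) + x * a s" for a
    by simp
  show ?thesis
  proof (intro set_eqI iffI)
    fix y assume "y \<in> rideal_gen ((f(s := x)) ` {..<Suc s})"
    then obtain a where "y = (\<Sum>i<s. f i * a i) + x * a s"
      unfolding mem_rideal_gen_tuple split by blast
    then show "y \<in> {j + x * r | j r. j \<in> rideal_gen (f ` {..<s})}"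
      unfolding mem_rideal_gen_tuple by blast
  next
    fix y assume "y \<in> {j + x * r | j r. j \<in> rideal_gen (f ` {..<s})}"
    then obtain a r where "y = (\<Sum>i<s. f i * a i) + x * r"
      unfolding mem_rideal_gen_tuple by blast
    then have "y = (\<Sum>i<Suc s. (f(s := x)) i * (a(s := r)) i)"
      unfolding split by simp
    then show "y \<in> rideal_gen ((f(s := x)) ` {..<Suc s})"
      unfolding mem_rideal_gen_tuple by blast
  qed
qed

text \<open>Elements of the free right module \<open>R\<^sup>n\<close> are vectors \<open>nat \<Rightarrow> 'r\<close> vanishing from \<open>n\<close> on;
  a list \<open>ws\<close> of vectors acts as the matrix with columns \<open>ws\<close>.\<close>

definition lin_comb :: "(nat \<Rightarrow> 'r::ring_1) list \<Rightarrow> (nat \<Rightarrow> 'r) \<Rightarrow> nat \<Rightarrow> 'r" where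
  "lin_comb ws r = (\<lambda>i. \<Sum>k<length ws. (ws ! k) i * r k)"

definition right_span :: "(nat \<Rightarrow> 'r::ring_1) list \<Rightarrow> (nat \<Rightarrow> 'r) set" where
  "right_span ws = range (lin_comb ws)"

definition right_submodule :: "(nat \<Rightarrow> 'r::ring_1) set \<Rightarrow> bool" where
  "right_submodule S \<longleftrightarrow>
     (\<lambda>_. 0) \<in> S \<and> (\<forall>v\<in>S. \<forall>w\<in>S. (\<lambda>i. v i + w i) \<in> S) \<and> (\<forall>v\<in>S. \<forall>a. (\<lambda>i. v i * a) \<in> S)"

definition generates :: "(nat \<Rightarrow> 'r::ring_1) set \<Rightarrow> (nat \<Rightarrow> 'r) list \<Rightarrow> bool" where
  "generates K ws \<longleftrightarrow> set ws \<subseteq> K \<and> K = right_span ws"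

lemma right_submodule_add:
  "right_submodule S \<Longrightarrow> v \<in> S \<Longrightarrow> w \<in> S \<Longrightarrow> (\<lambda>i. v i + w i) \<in> S"
  unfolding right_submodule_def by blast

lemma right_submodule_sum:
  assumes S: "right_submodule S" and v: "\<And>k. k \<in> A \<Longrightarrow> v k \<in> S"
  shows "(\<lambda>i. \<Sum>k\<in>A. v k i * a k) \<in> S"
  using v
proof (induction A rule: infinite_finite_induct)
  case (insert k A)
  then have "(\<lambda>i. v k i * a k) \<in> S" "(\<lambda>i. \<Sum>k\<in>A. v k i * a k) \<in> S"
    using S unfolding right_submodule_def by auto
  with insert show ?case
    using right_submodule_add[OF S] by simp
qed (use S in \<open>simp_all add: right_submodule_def\<close>)

lemma lin_comb_in_right_span: "lin_comb ws r \<in> right_span ws"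
  unfolding right_span_def by (rule rangeI)

lemma right_submodule_right_span: "right_submodule (right_span ws)"
  unfolding right_submodule_def right_span_def
proof (intro conjI ballI allI)
  show "(\<lambda>_. 0) \<in> range (lin_comb ws)"
    unfolding lin_comb_def by (rule range_eqI[of _ _ "\<lambda>_. 0"]) simp
  show "(\<lambda>i. v i + w i) \<in> range (lin_comb ws)"
    if vw: "v \<in> range (lin_comb ws)" "w \<in> range (lin_comb ws)" for v w
  proof -
    obtain r s where "v = lin_comb ws r" "w = lin_comb ws s"
      using vw by blast
    then show ?thesis
      unfolding lin_comb_def
      by (intro range_eqI[of _ _ "\<lambda>k. r k + s k"]) (simp add: distrib_left sum.distrib)
  qed
  show "(\<lambda>i. v i * a) \<in> range (lin_comb ws)" if v: "v \<in> range (lin_comb ws)" for v a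
  proof -
    obtain r where "v = lin_comb ws r"
      using v by blast
    then show ?thesis
      unfolding lin_comb_def
      by (intro range_eqI[of _ _ "\<lambda>k. r k * a"]) (simp add: sum_distrib_right mult.assoc)
  qed
qed

lemma right_span_base: "w \<in> set ws \<Longrightarrow> w \<in> right_span ws"
proof -
  assume "w \<in> set ws"
  then obtain j where j: "j < length ws" "ws ! j = w"
    by (auto simp: in_set_conv_nth)
  then have "lin_comb ws (\<lambda>k. if k = j then 1 else 0) = w"
    unfolding lin_comb_def by (auto simp: if_distrib cong: if_cong)
  then show ?thesis
    using lin_comb_in_right_span by metis
qed

lemma right_span_minimal:
  assumes "right_submodule S" "set ws \<subseteq> S"
  shows "right_span ws \<subseteq> S"
  unfolding right_span_def lin_comb_def using assms by (auto intro!: right_submodule_sum)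

lemma right_span_mono: "set ws \<subseteq> set ws' \<Longrightarrow> right_span ws \<subseteq> right_span ws'"
  using right_span_minimal[OF right_submodule_right_span] right_span_base by blast

lemma add_mem_right_span_append:
  "v \<in> right_span ws \<Longrightarrow> w \<in> right_span us \<Longrightarrow> (\<lambda>i. v i + w i) \<in> right_span (ws @ us)"
  using right_span_mono[of ws "ws @ us"] right_span_mono[of us "ws @ us"]
  by (intro right_submodule_add[OF right_submodule_right_span]) auto

lemma lin_comb_lin_comb: "lin_comb ws (lin_comb us s) = lin_comb (map (lin_comb ws) us) s"
proof
  fix i
  have "lin_comb ws (lin_comb us s) i
      = (\<Sum>k<length ws. \<Sum>p<length us. (ws ! k) i * (us ! p) k * s p)"
    by (simp add: lin_comb_def sum_distrib_left mult.assoc)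
  also have "\<dots> = (\<Sum>p<length us. (\<Sum>k<length ws. (ws ! k) i * (us ! p) k) * s p)"
    by (subst sum.swap) (simp add: sum_distrib_right)
  also have "\<dots> = lin_comb (map (lin_comb ws) us) s i"
    by (simp add: lin_comb_def)
  finally show "lin_comb ws (lin_comb us s) i = lin_comb (map (lin_comb ws) us) s i" .
qed

lemma generatesI:
  assumes "right_submodule K" "set ws \<subseteq> K" "\<And>v. v \<in> K \<Longrightarrow> v \<in> right_span ws"
  shows "generates K ws"
  unfolding generates_def using right_span_minimal[OF assms(1,2)] assms(2,3) by blast

definition syzygies :: "nat \<Rightarrow> (nat \<Rightarrow> 'r::ring_1) \<Rightarrow> (nat \<Rightarrow> 'r) set" where
  "syzygies t h = {r. (\<forall>i\<ge>t. r i = 0) \<and> (\<Sum>i<t. h i * r i) = 0}"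

lemma right_submodule_syzygies: "right_submodule (syzygies t h)"
proof -
  have "(\<Sum>i<t. h i * (v i * a)) = (\<Sum>i<t. h i * v i) * a" for v a
    by (simp add: sum_distrib_right mult.assoc)
  then show ?thesis
    unfolding right_submodule_def syzygies_def by (auto simp: distrib_left sum.distrib)
qed

lemma sum_mult_lin_comb:
  "(\<Sum>k<t. h k * lin_comb ws v k) = (\<Sum>i<length ws. (\<Sum>k<t. h k * (ws ! i) k) * v i)"
proof -
  have "(\<Sum>k<t. h k * lin_comb ws v k) = (\<Sum>k<t. \<Sum>i<length ws. h k * (ws ! i) k * v i)"
    by (simp add: lin_comb_def sum_distrib_left mult.assoc)
  also have "\<dots> = (\<Sum>i<length ws. (\<Sum>k<t. h k * (ws ! i) k) * v i)"
    by (subst sum.swap) (simp add: sum_distrib_right)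
  finally show ?thesis .
qed

definition unit_vec :: "nat \<Rightarrow> nat \<Rightarrow> 'r::ring_1" where
  "unit_vec k = (\<lambda>j. if j = k then 1 else 0)"

lemma lin_comb_unit_vecs:
  assumes "\<forall>i\<ge>t. r i = 0"
  shows "lin_comb (map unit_vec [0..<t]) r = r"
proof
  fix i
  have "lin_comb (map unit_vec [0..<t]) r i = (\<Sum>k<t. (if i = k then 1 else 0) * r k)"
    by (simp add: lin_comb_def unit_vec_def)
  also have "\<dots> = (\<Sum>k<t. if k = i then r k else 0)"
    by (rule sum.cong) auto
  also have "\<dots> = r i"
    using assms by (subst sum.delta) auto
  finally show "lin_comb (map unit_vec [0..<t]) r i = r i" .
qed

lemma lin_comb_mem_syzygies:
  assumes "length Bs = t'" "\<And>i. i < t' \<Longrightarrow> (\<Sum>k<t. h k * (Bs ! i) k) = h' i"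
    and "\<And>i k. i < t' \<Longrightarrow> t \<le> k \<Longrightarrow> (Bs ! i) k = 0"
    and "s \<in> syzygies t' h'"
  shows "lin_comb Bs s \<in> syzygies t h"
proof -
  have "(\<Sum>k<t. h k * lin_comb Bs s k) = (\<Sum>i<t'. h' i * s i)"
    unfolding sum_mult_lin_comb using assms(1,2) by (intro sum.cong) auto
  with assms show ?thesis
    by (simp add: syzygies_def lin_comb_def)
qed

lemma unit_vec_diff_mem_syzygies:
  assumes k: "k < t" and a: "(\<Sum>i<t'. h' i * a i) = h k"
    and B: "length Bs = t'" "\<And>i. i < t' \<Longrightarrow> (\<Sum>k<t. h k * (Bs ! i) k) = h' i"
      "\<And>i k. i < t' \<Longrightarrow> t \<le> k \<Longrightarrow> (Bs ! i) k = 0"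
  shows "(\<lambda>j. unit_vec k j - lin_comb Bs a j) \<in> syzygies t h"
proof -
  have "(\<Sum>j<t. h j * lin_comb Bs a j) = (\<Sum>i<t'. h' i * a i)"
    unfolding sum_mult_lin_comb using B(1,2) by (intro sum.cong) auto
  moreover have "(\<Sum>j<t. h j * unit_vec k j) = h k"
    using k by (simp add: unit_vec_def if_distrib cong: if_cong)
  ultimately have "(\<Sum>j<t. h j * (unit_vec k j - lin_comb Bs a j)) = 0"
    using a by (simp add: right_diff_distrib sum_subtractf)
  moreover have "unit_vec k j - lin_comb Bs a j = 0" if "t \<le> j" for j
    using that k B(1,3) by (simp add: unit_vec_def lin_comb_def)
  ultimately show ?thesis
    by (simp add: syzygies_def)
qed

text \<open>If \<open>h = h' A\<close> and \<open>h' = h B\<close>, then \<open>r = B A r + (1 - B A) r\<close> for every syzygy \<open>r\<close> of \<open>h\<close>.\<close>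

lemma generates_syzygies_transfer:
  fixes h h' :: "nat \<Rightarrow> 'r::ring_1"
  assumes A: "length As = t" "\<And>k. k < t \<Longrightarrow> (\<Sum>i<t'. h' i * (As ! k) i) = h k"
      "\<And>k i. k < t \<Longrightarrow> t' \<le> i \<Longrightarrow> (As ! k) i = 0"
    and B: "length Bs = t'" "\<And>i. i < t' \<Longrightarrow> (\<Sum>k<t. h k * (Bs ! i) k) = h' i"
      "\<And>i k. i < t' \<Longrightarrow> t \<le> k \<Longrightarrow> (Bs ! i) k = 0"
    and ws: "generates (syzygies t' h') ws"
  defines "S \<equiv> map (\<lambda>k j. unit_vec k j - lin_comb Bs (As ! k) j) [0..<t]"
  shows "generates (syzygies t h) (map (lin_comb Bs) ws @ S)"
proof (rule generatesI[OF right_submodule_syzygies])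
  have "S ! k \<in> syzygies t h" if "k < t" for k
    using unit_vec_diff_mem_syzygies[OF that A(2)[OF that] B] that by (simp add: S_def)
  moreover have "lin_comb Bs w \<in> syzygies t h" if "w \<in> set ws" for w
    using ws that by (intro lin_comb_mem_syzygies[OF B]) (auto simp: generates_def)
  ultimately show "set (map (lin_comb Bs) ws @ S) \<subseteq> syzygies t h"
    by (auto simp: S_def in_set_conv_nth)
next
  fix r assume r: "r \<in> syzygies t h"
  define y where "y = lin_comb As r"
  have "y \<in> syzygies t' h'"
    unfolding y_def using A r by (intro lin_comb_mem_syzygies) auto
  then obtain \<rho> where "y = lin_comb ws \<rho>"
    using ws unfolding generates_def right_span_def by blast
  then have "lin_comb Bs y = lin_comb (map (lin_comb Bs) ws) \<rho>"
    by (simp add: lin_comb_lin_comb)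
  then have By: "lin_comb Bs y \<in> right_span (map (lin_comb Bs) ws)"
    by (metis lin_comb_in_right_span)
  have "r j - lin_comb Bs y j = lin_comb S r j" for j
  proof -
    have "r j - lin_comb Bs y j
        = lin_comb (map unit_vec [0..<t]) r j - lin_comb (map (lin_comb Bs) As) r j"
      using r lin_comb_unit_vecs[of t r] by (simp add: syzygies_def y_def lin_comb_lin_comb)
    also have "\<dots> = lin_comb S r j"
      using A(1) by (simp add: lin_comb_def S_def sum_subtractf left_diff_distrib)
    finally show ?thesis .
  qed
  then have "r = (\<lambda>j. lin_comb Bs y j + lin_comb S r j)"
    by (auto simp: algebra_simps)
  with By show "r \<in> right_span (map (lin_comb Bs) ws @ S)"
    using add_mem_right_span_append lin_comb_in_right_span by metis
qed

lemma syzygies_fun_upd_reduce: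
  fixes f :: "nat \<Rightarrow> 'r::ring_1"
  assumes colon: "{a. x * a \<in> rideal_gen (f ` {..<s})} = rideal_gen (cs ` {..<p})"
    and Us: "\<And>q. q < p \<Longrightarrow> (\<Sum>i<s. f i * (Us ! q) i) = x * cs q"
    and z: "z \<in> syzygies (Suc s) (f(s := x))"
  defines "Q \<equiv> map (\<lambda>q i. if i < s then - (Us ! q) i else if i = s then cs q else 0) [0..<p]"
  obtains \<tau> where "(\<lambda>i. z i - lin_comb Q \<tau> i) \<in> syzygies s f"
proof -
  have z0: "(\<Sum>i<s. f i * z i) + x * z s = 0"
    using z unfolding syzygies_def by simp
  then have "x * z s = (\<Sum>i<s. f i * (- z i))"
    by (simp add: sum_negf eq_neg_iff_add_eq_0 add.commute)
  then have "z s \<in> rideal_gen (cs ` {..<p})"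
    unfolding colon[symmetric] mem_rideal_gen_tuple by (simp add: exI[of _ "\<lambda>i. - z i"])
  then obtain \<tau> where \<tau>: "z s = (\<Sum>q<p. cs q * \<tau> q)"
    unfolding mem_rideal_gen_tuple by blast
  define y where "y = (\<lambda>i. if i < s then z i + (\<Sum>q<p. (Us ! q) i * \<tau> q) else 0)"
  have "z i - lin_comb Q \<tau> i = y i" for i
  proof -
    have "lin_comb Q \<tau> i
        = (\<Sum>q<p. (if i < s then - (Us ! q) i else if i = s then cs q else 0) * \<tau> q)"
      unfolding lin_comb_def by (rule sum.cong) (simp_all add: Q_def)
    then show ?thesis
      using z \<tau> by (cases "i < s"; cases "i = s") (auto simp: y_def syzygies_def sum_negf)
  qed
  moreover have "(\<Sum>i<s. f i * y i) = (\<Sum>i<s. f i * z i) + (\<Sum>q<p. (\<Sum>i<s. f i * (Us ! q) i) * \<tau> q)"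
    by (simp add: y_def distrib_left sum.distrib sum_distrib_left sum_distrib_right mult.assoc
        sum.swap[of _ "{..<s}"])
  moreover have "(\<Sum>q<p. (\<Sum>i<s. f i * (Us ! q) i) * \<tau> q) = (\<Sum>q<p. x * cs q * \<tau> q)"
    by (rule sum.cong) (simp_all add: Us)
  moreover have "(\<Sum>q<p. x * cs q * \<tau> q) = x * z s"
    by (simp add: \<tau> sum_distrib_left mult.assoc)
  ultimately have "(\<lambda>i. z i - lin_comb Q \<tau> i) \<in> syzygies s f"
    using z0 by (simp add: syzygies_def y_def)
  then show ?thesis
    by (rule that)
qed

text \<open>The syzygies of \<open>(f, x)\<close> are those of \<open>f\<close> together with one vector \<open>(-u, c)\<close> per generator
  \<open>c\<close> of the colon ideal \<open>J : x\<close>, where \<open>x c = f u\<close>.\<close>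

lemma generates_syzygies_fun_upd:
  fixes f :: "nat \<Rightarrow> 'r::ring_1"
  assumes ws: "generates (syzygies s f) ws"
    and colon: "{a. x * a \<in> rideal_gen (f ` {..<s})} = rideal_gen (cs ` {..<p})"
    and Us: "\<And>q. q < p \<Longrightarrow> (\<Sum>i<s. f i * (Us ! q) i) = x * cs q"
  defines "Q \<equiv> map (\<lambda>q i. if i < s then - (Us ! q) i else if i = s then cs q else 0) [0..<p]"
  shows "generates (syzygies (Suc s) (f(s := x))) (ws @ Q)"
proof (rule generatesI[OF right_submodule_syzygies])
  have split: "(\<Sum>i<Suc s. (f(s := x)) i * v i) = (\<Sum>i<s. f i * v i) + x * v s" for v
    by simp
  have "w \<in> syzygies (Suc s) (f(s := x))" if "w \<in> set ws" for w
    using ws that unfolding generates_def syzygies_def split by auto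
  moreover have "Q ! q \<in> syzygies (Suc s) (f(s := x))" if q: "q < p" for q
  proof -
    have "(\<Sum>i<s. f i * (Q ! q) i) = - (\<Sum>i<s. f i * (Us ! q) i)"
      by (simp add: Q_def q sum_negf[symmetric])
    with Us[OF q] q show ?thesis
      unfolding syzygies_def split by (simp add: Q_def)
  qed
  moreover have "length Q = p"
    by (simp add: Q_def)
  ultimately show "set (ws @ Q) \<subseteq> syzygies (Suc s) (f(s := x))"
    by (auto simp: in_set_conv_nth)
next
  fix z assume "z \<in> syzygies (Suc s) (f(s := x))"
  then obtain \<tau> where "(\<lambda>i. z i - lin_comb Q \<tau> i) \<in> syzygies s f"
    unfolding Q_def using syzygies_fun_upd_reduce[OF colon Us] by blast
  then have "(\<lambda>i. z i - lin_comb Q \<tau> i) \<in> right_span ws"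
    using ws unfolding generates_def by blast
  then have "(\<lambda>i. (z i - lin_comb Q \<tau> i) + lin_comb Q \<tau> i) \<in> right_span (ws @ Q)"
    using add_mem_right_span_append lin_comb_in_right_span by blast
  then show "z \<in> right_span (ws @ Q)"
    by simp
qed

definition kernel_rows :: "nat \<Rightarrow> (nat \<Rightarrow> nat \<Rightarrow> 'r::ring_1) \<Rightarrow> nat \<Rightarrow> (nat \<Rightarrow> 'r) set" where
  "kernel_rows n M m = {v. (\<forall>i\<ge>n. v i = 0) \<and> (\<forall>j<m. (\<Sum>i<n. M j i * v i) = 0)}"

lemma right_submodule_kernel_rows: "right_submodule (kernel_rows n M m)"
proof -
  have "(\<Sum>i<n. M j i * (v i * c)) = (\<Sum>i<n. M j i * v i) * c" for j v c
    by (simp add: sum_distrib_right mult.assoc)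
  then show ?thesis
    unfolding right_submodule_def kernel_rows_def by (auto simp: distrib_left sum.distrib)
qed

lemma lin_comb_mem_kernel_rows_Suc:
  assumes ws: "set ws \<subseteq> kernel_rows n M m"
    and u: "u \<in> syzygies (length ws) (\<lambda>l. \<Sum>i<n. M m i * (ws ! l) i)"
  shows "lin_comb ws u \<in> kernel_rows n M (Suc m)"
proof -
  have ws_ker: "ws ! l \<in> kernel_rows n M m" if "l < length ws" for l
    using ws that nth_mem by blast
  have row: "(\<Sum>i<n. M j i * lin_comb ws u i) = (\<Sum>l<length ws. (\<Sum>i<n. M j i * (ws ! l) i) * u l)"
    for j by (rule sum_mult_lin_comb)
  have "(\<Sum>i<n. M j i * lin_comb ws u i) = 0" if "j < Suc m" for j
  proof (cases "j < m")
    case True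
    with ws_ker show ?thesis
      unfolding row by (simp add: kernel_rows_def)
  next
    case False
    with that have "j = m"
      by simp
    with u show ?thesis
      unfolding row by (simp add: syzygies_def)
  qed
  moreover have "lin_comb ws u i = 0" if "n \<le> i" for i
    using ws_ker that by (simp add: lin_comb_def kernel_rows_def)
  ultimately show ?thesis
    by (simp add: kernel_rows_def)
qed

text \<open>An element \<open>ws r\<close> of the kernel of the first \<open>m\<close> rows is also killed by row \<open>m\<close> iff \<open>r\<close>
  is a syzygy of the entries of row \<open>m\<close> applied to \<open>ws\<close>.\<close>

lemma generates_kernel_rows_Suc:
  assumes ws: "generates (kernel_rows n M m) ws"
    and us: "generates (syzygies (length ws) (\<lambda>l. \<Sum>i<n. M m i * (ws ! l) i)) us"
  shows "generates (kernel_rows n M (Suc m)) (map (lin_comb ws) us)"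
proof (rule generatesI[OF right_submodule_kernel_rows])
  have "set ws \<subseteq> kernel_rows n M m" "set us \<subseteq> syzygies (length ws) (\<lambda>l. \<Sum>i<n. M m i * (ws ! l) i)"
    using ws us unfolding generates_def by blast+
  then show "set (map (lin_comb ws) us) \<subseteq> kernel_rows n M (Suc m)"
    by (auto intro: lin_comb_mem_kernel_rows_Suc)
next
  fix v assume v: "v \<in> kernel_rows n M (Suc m)"
  then have "v \<in> right_span ws"
    using ws unfolding generates_def by (auto simp: kernel_rows_def)
  then obtain r where r: "v = lin_comb ws r"
    unfolding right_span_def by blast
  define r' where "r' l = (if l < length ws then r l else 0)" for l
  have "lin_comb ws r' = v"
    unfolding r r'_def lin_comb_def by (intro ext sum.cong) auto
  moreover have "r' \<in> syzygies (length ws) (\<lambda>l. \<Sum>i<n. M m i * (ws ! l) i)"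
    using v \<open>lin_comb ws r' = v\<close> sum_mult_lin_comb[where t=n and h="M m" and ws=ws and v=r']
    by (auto simp: syzygies_def kernel_rows_def r'_def)
  then obtain s where "r' = lin_comb us s"
    using us unfolding generates_def right_span_def by blast
  ultimately show "v \<in> right_span (map (lin_comb ws) us)"
    by (metis lin_comb_in_right_span lin_comb_lin_comb)
qed

context graded_ring
begin

section \<open>Homogeneous syzygies\<close>

text \<open>\<open>c i\<close> is the degree of the \<open>i\<close>-th basis vector, i.e.\ the free module is \<open>\<Oplus>\<^sub>i R(-c i)\<close>.\<close>

definition homogeneous_vec :: "(nat \<Rightarrow> int) \<Rightarrow> (nat \<Rightarrow> 'r) \<Rightarrow> bool" where
  "homogeneous_vec c w \<longleftrightarrow> (\<exists>\<delta>. \<forall>i. w i \<in> Gz G (\<delta> - c i))"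

definition hom_fin_gen :: "(nat \<Rightarrow> 'r) set \<Rightarrow> (nat \<Rightarrow> int) \<Rightarrow> bool" where
  "hom_fin_gen K c \<longleftrightarrow> (\<exists>ws. generates K ws \<and> (\<forall>w\<in>set ws. homogeneous_vec c w))"

lemma lin_comb_in_Gz:
  assumes "\<And>i k. i < length ws \<Longrightarrow> (ws ! i) k \<in> Gz G (e i - c k)"
    and "\<And>i. i < length ws \<Longrightarrow> v i \<in> Gz G (\<delta> - e i)"
  shows "lin_comb ws v k \<in> Gz G (\<delta> - c k)"
  unfolding lin_comb_def
proof (rule Gz_sum)
  fix i assume "i \<in> {..<length ws}"
  then have "(ws ! i) k * v i \<in> Gz G ((e i - c k) + (\<delta> - e i))"
    using assms by (intro Gz_mult) auto
  then show "(ws ! i) k * v i \<in> Gz G (\<delta> - c k)"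
    by simp
qed

lemma hom_fin_gen_syzygies_zero:
  assumes "\<And>i. i < t \<Longrightarrow> h i = 0"
  shows "hom_fin_gen (syzygies t h) c"
  unfolding hom_fin_gen_def
proof (intro exI conjI ballI)
  let ?ws = "map unit_vec [0..<t] :: (nat \<Rightarrow> 'r) list"
  show "generates (syzygies t h) ?ws"
  proof (rule generatesI[OF right_submodule_syzygies])
    show "set ?ws \<subseteq> syzygies t h"
      using assms by (auto simp: syzygies_def unit_vec_def)
    show "v \<in> right_span ?ws" if "v \<in> syzygies t h" for v
      using that lin_comb_unit_vecs[of t v] lin_comb_in_right_span[of ?ws v]
      by (simp add: syzygies_def)
  qed
  show "homogeneous_vec c w" if "w \<in> set ?ws" for w
  proof -
    obtain k where "w = unit_vec k"
      using \<open>w \<in> set ?ws\<close> by auto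
    then have "w i \<in> Gz G (c k - c i)" for i
      by (simp add: unit_vec_def Gz_zero Gz_one)
    then show ?thesis
      unfolding homogeneous_vec_def by blast
  qed
qed

lemma homogeneous_vec_lin_comb:
  assumes "\<And>l i. l < length ws \<Longrightarrow> (ws ! l) i \<in> Gz G (\<delta> l - c i)" and "homogeneous_vec \<delta> u"
  shows "homogeneous_vec c (lin_comb ws u)"
proof -
  obtain \<gamma> where "\<forall>l. u l \<in> Gz G (\<gamma> - \<delta> l)"
    using assms(2) unfolding homogeneous_vec_def by blast
  then have "lin_comb ws u i \<in> Gz G (\<gamma> - c i)" for i
    using assms(1) by (intro lin_comb_in_Gz[where e=\<delta>]) auto
  then show ?thesis
    unfolding homogeneous_vec_def by blast
qed

lemma homogeneous_vec_shift: "homogeneous_vec (\<lambda>i. c i + k) w \<longleftrightarrow> homogeneous_vec c w"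
  unfolding homogeneous_vec_def
proof
  assume "\<exists>\<delta>. \<forall>i. w i \<in> Gz G (\<delta> - (c i + k))"
  then obtain \<delta> where "\<forall>i. w i \<in> Gz G ((\<delta> - k) - c i)"
    by (auto simp: algebra_simps)
  then show "\<exists>\<delta>. \<forall>i. w i \<in> Gz G (\<delta> - c i)" ..
next
  assume "\<exists>\<delta>. \<forall>i. w i \<in> Gz G (\<delta> - c i)"
  then obtain \<delta> where "\<forall>i. w i \<in> Gz G ((\<delta> + k) - (c i + k))"
    by auto
  then show "\<exists>\<delta>. \<forall>i. w i \<in> Gz G (\<delta> - (c i + k))" ..
qed

lemma homogeneous_vec_fun_upd_zero:
  assumes "homogeneous_vec c w" "w i = 0"
  shows "homogeneous_vec (c(i := k)) w"
proof -
  obtain \<delta> where "\<forall>j. w j \<in> Gz G (\<delta> - c j)"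
    using assms(1) unfolding homogeneous_vec_def by blast
  with assms(2) have "\<forall>j. w j \<in> Gz G (\<delta> - (c(i := k)) j)"
    using Gz_zero by auto
  then show ?thesis
    unfolding homogeneous_vec_def by blast
qed

lemma homogeneous_coefficient_columns:
  fixes h h' :: "nat \<Rightarrow> 'r"
  assumes h: "\<And>k. k < t \<Longrightarrow> h k \<in> Gz G (c k)" and h': "\<And>i. i < t' \<Longrightarrow> h' i \<in> Gz G (c' i)"
    and mem: "\<And>k. k < t \<Longrightarrow> h k \<in> rideal_gen (h' ` {..<t'})"
  obtains As where "length As = t" "\<forall>k<t. (\<Sum>i<t'. h' i * (As ! k) i) = h k"
    "\<forall>k<t. \<forall>i\<ge>t'. (As ! k) i = 0" "\<forall>k<t. \<forall>i. (As ! k) i \<in> Gz G (c k - c' i)"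
proof -
  have "\<exists>a. h k = (\<Sum>i<t'. h' i * a i)" if "k < t" for k
    using mem[OF that, unfolded mem_rideal_gen_tuple] .
  then have "\<forall>k. \<exists>a. k < t \<longrightarrow> h k = (\<Sum>i<t'. h' i * a i)"
    by blast
  from choice[OF this] obtain a where a: "\<And>k. k < t \<Longrightarrow> h k = (\<Sum>i<t'. h' i * a k i)"
    by blast
  define As where "As = map (\<lambda>k i. if i < t' then comp_int (c k - c' i) (a k i) else 0) [0..<t]"
  show ?thesis
  proof (rule that)
    show "\<forall>k<t. (\<Sum>i<t'. h' i * (As ! k) i) = h k"
    proof (intro allI impI)
      fix k assume k: "k < t"
      have "(\<Sum>i<t'. h' i * (As ! k) i) = (\<Sum>i<t'. h' i * comp_int (c k - c' i) (a k i))"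
        by (rule sum.cong) (use k in \<open>simp_all add: As_def\<close>)
      also have "\<dots> = h k"
        by (rule homogeneous_combination[OF h[OF k] h' a[OF k], symmetric])
      finally show "(\<Sum>i<t'. h' i * (As ! k) i) = h k" .
    qed
  qed (simp_all add: As_def comp_int_in_Gz Gz_zero)
qed

lemma hom_fin_gen_syzygies_change_generators:
  fixes h h' :: "nat \<Rightarrow> 'r"
  assumes h: "\<And>k. k < t \<Longrightarrow> h k \<in> Gz G (c k)" and h': "\<And>i. i < t' \<Longrightarrow> h' i \<in> Gz G (c' i)"
    and eq: "rideal_gen (h ` {..<t}) = rideal_gen (h' ` {..<t'})"
    and syz: "hom_fin_gen (syzygies t' h') c'"
  shows "hom_fin_gen (syzygies t h) c"
proof -
  have in_h': "h k \<in> rideal_gen (h' ` {..<t'})" if "k < t" for k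
    unfolding eq[symmetric] by (rule rideal_gen_base) (use that in blast)
  obtain As where As: "length As = t" "\<forall>k<t. (\<Sum>i<t'. h' i * (As ! k) i) = h k"
    "\<forall>k<t. \<forall>i\<ge>t'. (As ! k) i = 0" and As_deg: "\<forall>k<t. \<forall>i. (As ! k) i \<in> Gz G (c k - c' i)"
    by (rule homogeneous_coefficient_columns[OF h h' in_h'])
  have in_h: "h' i \<in> rideal_gen (h ` {..<t})" if "i < t'" for i
    unfolding eq by (rule rideal_gen_base) (use that in blast)
  obtain Bs where Bs: "length Bs = t'" "\<forall>i<t'. (\<Sum>k<t. h k * (Bs ! i) k) = h' i"
    "\<forall>i<t'. \<forall>k\<ge>t. (Bs ! i) k = 0" and Bs_deg: "\<forall>i<t'. \<forall>k. (Bs ! i) k \<in> Gz G (c' i - c k)"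
    by (rule homogeneous_coefficient_columns[OF h' h in_h])
  define S where "S = map (\<lambda>k j. unit_vec k j - lin_comb Bs (As ! k) j) [0..<t]"
  obtain ws where ws: "generates (syzygies t' h') ws"
    and ws_hom: "\<forall>w\<in>set ws. homogeneous_vec c' w"
    using syz unfolding hom_fin_gen_def by blast
  have "generates (syzygies t h) (map (lin_comb Bs) ws @ S)"
    unfolding S_def using As Bs ws by (intro generates_syzygies_transfer) auto
  moreover have "homogeneous_vec c (lin_comb Bs w)" if "w \<in> set ws" for w
    using Bs(1) Bs_deg ws_hom that by (intro homogeneous_vec_lin_comb) auto
  moreover have "homogeneous_vec c w" if "w \<in> set S" for w
  proof -
    obtain k where k: "k < t" "w = S ! k"
      using \<open>w \<in> set S\<close> by (auto simp: S_def in_set_conv_nth)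
    have "unit_vec k j \<in> Gz G (c k - c j)" for j
      by (simp add: unit_vec_def Gz_zero Gz_one)
    moreover have "lin_comb Bs (As ! k) j \<in> Gz G (c k - c j)" for j
      using k Bs(1) Bs_deg As_deg by (intro lin_comb_in_Gz[where e=c']) auto
    ultimately have "w j \<in> Gz G (c k - c j)" for j
      using k by (simp add: S_def Gz_diff)
    then show ?thesis
      unfolding homogeneous_vec_def by blast
  qed
  ultimately show ?thesis
    unfolding hom_fin_gen_def by (intro exI[of _ "map (lin_comb Bs) ws @ S"]) auto
qed

lemma hom_fin_gen_syzygies_fun_upd:
  fixes f cs :: "nat \<Rightarrow> 'r" and s p :: nat
  assumes f: "\<And>i. i < s \<Longrightarrow> f i \<in> Gz G (\<phi> i)" and syz: "hom_fin_gen (syzygies s f) \<phi>"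
    and x: "x \<in> Gz G \<xi>" and cs: "\<And>q. q < p \<Longrightarrow> cs q \<in> Gz G (\<kappa> q)"
    and colon: "{a. x * a \<in> rideal_gen (f ` {..<s})} = rideal_gen (cs ` {..<p})"
  shows "hom_fin_gen (syzygies (Suc s) (f(s := x))) (\<phi>(s := \<xi>))"
proof -
  have in_J: "x * cs q \<in> rideal_gen (f ` {..<s})" if "q < p" for q
    using colon rideal_gen_base[of "cs q" "cs ` {..<p}"] that by blast
  have deg: "x * cs q \<in> Gz G (\<xi> + \<kappa> q)" if "q < p" for q
    using Gz_mult[OF x cs[OF that]] .
  obtain Us where Us: "\<forall>q<p. (\<Sum>i<s. f i * (Us ! q) i) = x * cs q"
    and Us_deg: "\<forall>q<p. \<forall>i. (Us ! q) i \<in> Gz G ((\<xi> + \<kappa> q) - \<phi> i)"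
    by (rule homogeneous_coefficient_columns[OF deg f in_J])
  define Q where "Q = map (\<lambda>q i. if i < s then - (Us ! q) i else if i = s then cs q else 0) [0..<p]"
  obtain ws where ws: "generates (syzygies s f) ws" and ws_hom: "\<forall>w\<in>set ws. homogeneous_vec \<phi> w"
    using syz unfolding hom_fin_gen_def by blast
  have "generates (syzygies (Suc s) (f(s := x))) (ws @ Q)"
    unfolding Q_def using ws colon Us[rule_format] by (rule generates_syzygies_fun_upd)
  moreover have "homogeneous_vec (\<phi>(s := \<xi>)) w" if "w \<in> set ws" for w
    using ws ws_hom that
    by (intro homogeneous_vec_fun_upd_zero) (auto simp: generates_def syzygies_def)
  moreover have "homogeneous_vec (\<phi>(s := \<xi>)) w" if "w \<in> set Q" for w
  proof -
    have "length Q = p"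
      by (simp add: Q_def)
    then obtain q where q: "q < p" "w = Q ! q"
      using \<open>w \<in> set Q\<close> by (auto simp: in_set_conv_nth)
    have "w i \<in> Gz G ((\<xi> + \<kappa> q) - (\<phi>(s := \<xi>)) i)" for i
    proof -
      consider "i < s" | "i = s" | "s < i"
        by linarith
      then show ?thesis
        by cases (use q Us_deg cs Gz_zero Gz_uminus in \<open>simp_all add: Q_def\<close>)
    qed
    then show ?thesis
      unfolding homogeneous_vec_def by blast
  qed
  ultimately show ?thesis
    unfolding hom_fin_gen_def by (intro exI[of _ "ws @ Q"]) auto
qed

lemma mem_rideal_gen_if_comps:
  assumes "\<And>d. comp G d x \<noteq> 0 \<Longrightarrow> comp G d x \<in> Y"
  shows "x \<in> rideal_gen Y"
proof -
  have "(\<Sum>d\<in>{d. comp G d x \<noteq> 0}. comp G d x) \<in> rideal_gen Y"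
    using assms rideal_gen_base by (intro right_ideal_sum[OF right_ideal_rideal_gen]) blast
  then show ?thesis
    using sum_comp[OF finite_comp_support, of x x] by simp
qed

lemma fg_hom_right_ideal_homogeneous_generators:
  assumes "fg_hom_right_ideal G J"
  obtains s f \<phi> where "\<forall>i<s. f i \<in> Gz G (\<phi> i)" and "J = rideal_gen (f ` {..<(s::nat)})"
proof -
  obtain X where X: "finite X" "J = rideal_gen X"
    using assms unfolding fg_hom_right_ideal_def by blast
  have comp_J: "comp G d x \<in> J" if "x \<in> J" for x d
    using assms that unfolding fg_hom_right_ideal_def hom_right_ideal_def by blast
  define P where "P = (\<Union>x\<in>X. (\<lambda>d. (comp G d x, d)) ` {d. comp G d x \<noteq> 0})"
  have "finite P"
    unfolding P_def using X(1) finite_comp_support by blast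
  then obtain ps where ps: "set ps = P"
    using finite_list by blast
  define f where "f i = fst (ps ! i)" for i
  define \<phi> where "\<phi> i = int (snd (ps ! i))" for i
  have f_image: "f ` {..<length ps} = fst ` P"
    unfolding f_def ps[symmetric] by (force simp: in_set_conv_nth)
  show ?thesis
  proof (rule that)
    have "f i \<in> Gz G (\<phi> i)" if "i < length ps" for i
    proof -
      have "ps ! i \<in> P"
        using that ps nth_mem by blast
      then obtain x d where "ps ! i = (comp G d x, d)"
        unfolding P_def by blast
      then show ?thesis
        by (simp add: f_def \<phi>_def Gz_of_nat comp_in_G)
    qed
    then show "\<forall>i<length ps. f i \<in> Gz G (\<phi> i)"
      by blast
    have "comp G d x \<in> f ` {..<length ps}" if "x \<in> X" "comp G d x \<noteq> 0" for x d
      unfolding f_image P_def using that by (intro image_eqI[of _ fst "(comp G d x, d)"]) auto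
    then have "X \<subseteq> rideal_gen (f ` {..<length ps})"
      using mem_rideal_gen_if_comps by blast
    moreover have "f ` {..<length ps} \<subseteq> J"
      unfolding f_image P_def using X(2) comp_J rideal_gen_base by force
    ultimately show "J = rideal_gen (f ` {..<length ps})"
      using X(2) right_ideal_rideal_gen rideal_gen_minimal by (metis subset_antisym)
  qed
qed

lemma fg_hom_right_ideal_rideal_gen_tuple:
  fixes h :: "nat \<Rightarrow> 'r"
  assumes h: "\<forall>i<t. h i \<in> Gz G (c i)"
  shows "fg_hom_right_ideal G (rideal_gen (h ` {..<t}))"
  unfolding fg_hom_right_ideal_def hom_right_ideal_def
proof (intro conjI ballI allI)
  show "right_ideal (rideal_gen (h ` {..<t}))"
    by (rule right_ideal_rideal_gen)
  show "\<exists>X. finite X \<and> rideal_gen (h ` {..<t}) = rideal_gen X"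
    by (intro exI[of _ "h ` {..<t}"]) simp
  fix y d assume "y \<in> rideal_gen (h ` {..<t})"
  then obtain r where r: "y = (\<Sum>i<t. h i * r i)"
    unfolding mem_rideal_gen_tuple by blast
  have "comp G d y = comp_int (int d) y"
    by (simp add: comp_int_def)
  also have "\<dots> = (\<Sum>i<t. h i * comp_int (int d - c i) (r i))"
    unfolding r comp_int_sum using h by (intro sum.cong) (auto simp: comp_int_mult_left)
  finally show "comp G d y \<in> rideal_gen (h ` {..<t})"
    unfolding mem_rideal_gen_tuple by (rule exI[where x="\<lambda>i. comp_int (int d - c i) (r i)"])
qed

section \<open>Induction along a rate filtration\<close>

definition syzygies_fin_gen :: "'r set \<Rightarrow> bool" where
  "syzygies_fin_gen I \<longleftrightarrow> (\<forall>(t::nat) h c. (\<forall>i<t. h i \<in> Gz G (c i)) \<and> rideal_gen (h ` {..<t}) = I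
     \<longrightarrow> hom_fin_gen (syzygies t h) c)"

lemma syzygies_fin_gen_zero: "syzygies_fin_gen {0}"
  unfolding syzygies_fin_gen_def
proof (intro allI impI, elim conjE)
  fix t :: nat and h :: "nat \<Rightarrow> 'r" and c :: "nat \<Rightarrow> int"
  assume "rideal_gen (h ` {..<t}) = {0}"
  then have "h i = 0" if "i < t" for i
    using rideal_gen_base[of "h i" "h ` {..<t}"] that by blast
  then show "hom_fin_gen (syzygies t h) c"
    by (rule hom_fin_gen_syzygies_zero)
qed

lemma syzygies_fin_gen_extend:
  assumes J: "syzygies_fin_gen J" "fg_hom_right_ideal G J" and x: "homogeneous G x"
    and colon_fg: "fg_hom_right_ideal G {a. x * a \<in> J}"
  shows "syzygies_fin_gen {j + x * r | j r. j \<in> J}"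
  unfolding syzygies_fin_gen_def
proof (intro allI impI, elim conjE)
  fix t :: nat and h :: "nat \<Rightarrow> 'r" and c :: "nat \<Rightarrow> int"
  assume h: "\<forall>i<t. h i \<in> Gz G (c i)"
    and hI: "rideal_gen (h ` {..<t}) = {j + x * r | j r. j \<in> J}"
  obtain e where x_deg: "x \<in> Gz G (int e)"
    using x unfolding homogeneous_def by (auto simp: Gz_of_nat)
  obtain s f \<phi> where f: "\<forall>i<s. f i \<in> Gz G (\<phi> i)" and Jf: "J = rideal_gen (f ` {..<(s::nat)})"
    using fg_hom_right_ideal_homogeneous_generators[OF J(2)] by blast
  obtain p cs \<kappa> where cs: "\<forall>q<p. cs q \<in> Gz G (\<kappa> q)"
    and colon: "{a. x * a \<in> J} = rideal_gen (cs ` {..<(p::nat)})"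
    using fg_hom_right_ideal_homogeneous_generators[OF colon_fg] by blast
  have syz_f: "hom_fin_gen (syzygies s f) \<phi>"
    using J(1) f Jf unfolding syzygies_fin_gen_def by blast
  have syz: "hom_fin_gen (syzygies (Suc s) (f(s := x))) (\<phi>(s := int e))"
    by (rule hom_fin_gen_syzygies_fun_upd[OF f[rule_format] syz_f x_deg cs[rule_format]
          colon[unfolded Jf]])
  have eq: "rideal_gen (h ` {..<t}) = rideal_gen ((f(s := x)) ` {..<Suc s})"
    unfolding hI rideal_gen_fun_upd Jf ..
  have deg: "(f(s := x)) i \<in> Gz G ((\<phi>(s := int e)) i)" if "i < Suc s" for i
    using that f x_deg by (cases "i = s") auto
  show "hom_fin_gen (syzygies t h) c"
    by (rule hom_fin_gen_syzygies_change_generators[OF h[rule_format] deg eq syz])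
qed

lemma rate_filtration_fg_hom_right_ideal:
  "rate_filtration G F \<Longrightarrow> I \<in> F \<Longrightarrow> fg_hom_right_ideal G I"
  unfolding rate_filtration_def by blast

lemma rate_filtration_step:
  assumes F: "rate_filtration G F" and I: "I \<in> F" "I \<noteq> {0}"
  obtains J x where "J \<in> F" "J \<subset> I" "homogeneous G x" "I = {j + x * r | j r. j \<in> J}"
    "{a. x * a \<in> J} \<in> F"
proof -
  obtain J x where J: "J \<in> F" "J \<noteq> I" and x: "homogeneous G x"
    and IJ: "I = {j + x * r | j r. j \<in> J}" and colon: "{a. x * a \<in> J} \<in> F"
    using F[unfolded rate_filtration_def, THEN conjunct2, THEN conjunct2, THEN conjunct2,
        rule_format, OF I]
    by (elim bexE exE conjE) (rule that)
  have "J \<subseteq> I"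
  proof
    fix j assume "j \<in> J"
    then have "j + x * 0 \<in> {j + x * r | j r. j \<in> J}"
      by blast
    then show "j \<in> I"
      using IJ by simp
  qed
  with J x IJ colon show ?thesis
    by (intro that) auto
qed

text \<open>A rate filtration alone does not make the descent \<open>I \<leadsto> J\<close> terminate; the measure \<open>\<mu>\<close>
  does.\<close>

lemma syzygies_fin_gen_filtration:
  fixes \<mu> :: "'r set \<Rightarrow> nat"
  assumes F: "rate_filtration G F"
    and \<mu>: "\<And>I J. I \<in> F \<Longrightarrow> J \<in> F \<Longrightarrow> J \<subset> I \<Longrightarrow> \<mu> J < \<mu> I"
  shows "I \<in> F \<Longrightarrow> syzygies_fin_gen I"
proof (induction "\<mu> I" arbitrary: I rule: less_induct)
  case less
  show ?case
  proof (cases "I = {0}")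
    case True
    then show ?thesis
      using syzygies_fin_gen_zero by simp
  next
    case False
    then obtain J x where J: "J \<in> F" "J \<subset> I" and x: "homogeneous G x"
      and IJ: "I = {j + x * r | j r. j \<in> J}" and colon: "{a. x * a \<in> J} \<in> F"
      using rate_filtration_step[OF F less.prems] by blast
    have "syzygies_fin_gen J"
      using J less.prems by (intro less.hyps \<mu>)
    then show ?thesis
      unfolding IJ using J(1) x colon rate_filtration_fg_hom_right_ideal[OF F]
      by (intro syzygies_fin_gen_extend)
  qed
qed

section \<open>Ideals generated in bounded degree\<close>

definition low_degree :: "nat \<Rightarrow> 'r set" where
  "low_degree d = {x. \<forall>e>d. comp G e x = 0}"

text \<open>\<open>mdeg\<close> reads degrees off a generating set chosen by \<open>SOME\<close>, so it is meaningful only once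
  a minimal homogeneous generating set is known to exist.\<close>

lemma fg_hom_right_ideal_ex_min_hom_gens:
  assumes "fg_hom_right_ideal G I"
  shows "\<exists>X. min_hom_gens G I X"
proof -
  obtain s f \<phi> where f: "\<forall>i<s. f i \<in> Gz G (\<phi> i)" and If: "I = rideal_gen (f ` {..<(s::nat)})"
    using fg_hom_right_ideal_homogeneous_generators[OF assms] by blast
  let ?Y = "f ` {..<s}"
  have Y_hom: "homogeneous G y" if y: "y \<in> ?Y" for y
  proof -
    obtain i where "i < s" "y = f i"
      using y by blast
    then have "y \<in> Gz G (\<phi> i)"
      using f by blast
    then show ?thesis
      unfolding homogeneous_def Gz_def by (cases "\<phi> i < 0") (auto simp: G_zero)
  qed
  define P where "P Z \<longleftrightarrow> Z \<subseteq> ?Y \<and> rideal_gen Z = I" for Z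
  have "P ?Y"
    unfolding P_def using If by simp
  then obtain Z where Z: "P Z" and Z_min: "\<And>Z'. P Z' \<Longrightarrow> card Z \<le> card Z'"
    using ex_has_least_nat[of P ?Y card] by blast
  have "finite Z"
    using Z unfolding P_def using finite_subset by blast
  have "min_hom_gens G I Z"
    unfolding min_hom_gens_def
  proof (intro conjI allI impI ballI)
    show "homogeneous G x" if "x \<in> Z" for x
      using Z Y_hom that unfolding P_def by blast
    show "rideal_gen Z = I"
      using Z unfolding P_def by simp
    show "rideal_gen Z' \<noteq> I" if "Z' \<subset> Z" for Z'
    proof
      assume "rideal_gen Z' = I"
      then have "P Z'"
        using that Z unfolding P_def by blast
      with Z_min psubset_card_mono[OF \<open>finite Z\<close> that] show False
        by fastforce
    qed
  qed fact
  then show ?thesis ..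
qed

lemma fg_hom_right_ideal_generated_in_low_degree:
  assumes I: "fg_hom_right_ideal G I"
  obtains X where "rideal_gen X = I" and "X \<subseteq> low_degree (mdeg G I)"
proof -
  define X where "X = (SOME X. min_hom_gens G I X)"
  have X: "min_hom_gens G I X"
    unfolding X_def using fg_hom_right_ideal_ex_min_hom_gens[OF I] by (rule someI_ex)
  have "x \<in> low_degree (mdeg G I)" if x: "x \<in> X" for x
  proof -
    obtain e where "x \<in> G e"
      using X x unfolding min_hom_gens_def homogeneous_def by blast
    then have "x \<in> G (hdeg G x)"
      unfolding hdeg_def by (rule LeastI)
    moreover have "hdeg G x \<le> mdeg G I"
      unfolding mdeg_def X_def[symmetric] using X x unfolding min_hom_gens_def by (intro Max_ge) auto
    ultimately show ?thesis
      unfolding low_degree_def by (auto simp: comp_homogeneous)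
  qed
  moreover have "rideal_gen X = I"
    using X unfolding min_hom_gens_def by blast
  ultimately show ?thesis
    using that by blast
qed

end

section \<open>Linear algebra over \<open>R\<^sub>0\<close>\<close>

locale graded_k_algebra = graded_ring G for G :: "nat \<Rightarrow> 'r::ring_1 set" +
  assumes G0_central: "a \<in> G 0 \<Longrightarrow> a * x = x * a"
    and G0_inverse: "a \<in> G 0 \<Longrightarrow> a \<noteq> 0 \<Longrightarrow> \<exists>b\<in>G 0. a * b = 1"
begin

lemma G0_mult: "a \<in> G 0 \<Longrightarrow> b \<in> G 0 \<Longrightarrow> a * b \<in> G 0"
  using G_mult[of a 0 b 0] by simp

definition kspace :: "'r set \<Rightarrow> bool" where
  "kspace V \<longleftrightarrow> 0 \<in> V \<and> (\<forall>v\<in>V. \<forall>w\<in>V. v + w \<in> V) \<and> (\<forall>a\<in>G 0. \<forall>v\<in>V. a * v \<in> V)"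

lemma kspace_add: "kspace V \<Longrightarrow> v \<in> V \<Longrightarrow> w \<in> V \<Longrightarrow> v + w \<in> V"
  unfolding kspace_def by blast

lemma kspace_smult: "kspace V \<Longrightarrow> a \<in> G 0 \<Longrightarrow> v \<in> V \<Longrightarrow> a * v \<in> V"
  unfolding kspace_def by blast

lemma kspace_diff:
  assumes "kspace V" "v \<in> V" "w \<in> V"
  shows "v - w \<in> V"
  using kspace_add[OF assms(1,2) kspace_smult[OF assms(1) G_uminus[OF G_one] assms(3)]] by simp

lemma kspace_sum: "kspace V \<Longrightarrow> (\<And>a. a \<in> A \<Longrightarrow> f a \<in> V) \<Longrightarrow> sum f A \<in> V"
  by (induction A rule: infinite_finite_induct) (auto simp: kspace_def)

lemma kspace_sum_list: "kspace V \<Longrightarrow> set xs \<subseteq> V \<Longrightarrow> sum_list xs \<in> V"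
  by (induction xs) (auto simp: kspace_def)

definition kspan_from :: "'r list \<Rightarrow> nat \<Rightarrow> 'r set" where
  "kspan_from T i = {(\<Sum>j\<in>{i..<length T}. c j * T ! j) | c. \<forall>j. c j \<in> G 0}"

lemma kspan_from_ge_length: "length T \<le> i \<Longrightarrow> kspan_from T i = {0}"
  unfolding kspan_from_def by (auto intro: exI[of _ "\<lambda>_. 0"] simp: G_zero)

lemma kspace_kspan_from: "kspace (kspan_from T i)"
  unfolding kspace_def
proof (intro conjI ballI)
  show "0 \<in> kspan_from T i"
    unfolding kspan_from_def by (intro CollectI exI[of _ "\<lambda>_. 0"]) (simp add: G_zero)
  show "v + w \<in> kspan_from T i" if vw: "v \<in> kspan_from T i" "w \<in> kspan_from T i" for v w
  proof -
    obtain c d where "v = (\<Sum>j\<in>{i..<length T}. c j * T ! j)" "\<forall>j. c j \<in> G 0"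
      "w = (\<Sum>j\<in>{i..<length T}. d j * T ! j)" "\<forall>j. d j \<in> G 0"
      using vw unfolding kspan_from_def by blast
    then show ?thesis
      unfolding kspan_from_def
      by (intro CollectI exI[of _ "\<lambda>j. c j + d j"]) (simp add: sum.distrib distrib_right G_add)
  qed
  show "a * v \<in> kspan_from T i" if a: "a \<in> G 0" and v: "v \<in> kspan_from T i" for a v
  proof -
    obtain c where "v = (\<Sum>j\<in>{i..<length T}. c j * T ! j)" "\<forall>j. c j \<in> G 0"
      using v unfolding kspan_from_def by blast
    with a show ?thesis
      unfolding kspan_from_def
      by (intro CollectI exI[of _ "\<lambda>j. a * c j"]) (simp add: sum_distrib_left mult.assoc G0_mult)
  qed
qed

lemma kspan_from_decompose:
  assumes "i < length T" "v \<in> kspan_from T i"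
  obtains a w where "a \<in> G 0" "w \<in> kspan_from T (Suc i)" "v = a * T ! i + w"
proof -
  obtain c where c: "v = (\<Sum>j\<in>{i..<length T}. c j * T ! j)" "\<forall>j. c j \<in> G 0"
    using assms(2) unfolding kspan_from_def by blast
  have "{i..<length T} = insert i {Suc i..<length T}"
    using assms(1) by auto
  then have "v = c i * T ! i + (\<Sum>j\<in>{Suc i..<length T}. c j * T ! j)"
    using c(1) by simp
  moreover have "(\<Sum>j\<in>{Suc i..<length T}. c j * T ! j) \<in> kspan_from T (Suc i)"
    unfolding kspan_from_def using c(2) by blast
  ultimately show ?thesis
    using c(2) that by blast
qed

abbreviation kspan :: "'r list \<Rightarrow> 'r set" where
  "kspan T \<equiv> kspan_from T 0"

lemma kspan_base:
  assumes "w \<in> set T"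
  shows "w \<in> kspan T"
proof -
  obtain k where k: "k < length T" "T ! k = w"
    using assms by (auto simp: in_set_conv_nth)
  have "(\<Sum>j\<in>{0..<length T}. (if j = k then 1 else 0) * T ! j)
      = (\<Sum>j\<in>{0..<length T}. if j = k then T ! j else 0)"
    by (rule sum.cong) auto
  also have "\<dots> = w"
    using k by simp
  finally show ?thesis
    unfolding kspan_from_def using G_zero G_one
    by (intro CollectI exI[of _ "\<lambda>j. if j = k then 1 else 0"]) auto
qed

lemma kspan_minimal: "kspace V \<Longrightarrow> set T \<subseteq> V \<Longrightarrow> kspan T \<subseteq> V"
  unfolding kspan_from_def by (auto intro!: kspace_sum kspace_smult)

lemma kspan_mono: "set T \<subseteq> set T' \<Longrightarrow> kspan T \<subseteq> kspan T'"
  using kspan_minimal[OF kspace_kspan_from] kspan_base by blast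

lemma kspan_from_eliminate:
  assumes i: "i < length T" and v: "v \<in> kspan_from T i" "v \<notin> kspan_from T (Suc i)"
    and v': "v' \<in> kspan_from T i"
  obtains c where "c \<in> G 0" "v' - c * v \<in> kspan_from T (Suc i)"
proof -
  obtain a w where a: "a \<in> G 0" "w \<in> kspan_from T (Suc i)" "v = a * T ! i + w"
    using kspan_from_decompose[OF i v(1)] .
  obtain a' w' where a': "a' \<in> G 0" "w' \<in> kspan_from T (Suc i)" "v' = a' * T ! i + w'"
    using kspan_from_decompose[OF i v'] .
  have "a \<noteq> 0"
    using a v(2) by auto
  then obtain b where b: "b \<in> G 0" "b * a = 1"
    using G0_inverse[OF a(1)] G0_central by metis
  have c: "a' * b \<in> G 0"
    using G0_mult a'(1) b(1) .
  have "(a' * b) * (a * T ! i) = a' * T ! i"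
    by (simp add: mult.assoc[symmetric]) (simp add: mult.assoc b(2))
  then have "v' - (a' * b) * v = w' - (a' * b) * w"
    unfolding a(3) a'(3) by (simp add: distrib_left)
  then have "v' - (a' * b) * v \<in> kspan_from T (Suc i)"
    using a(2) a'(2) c by (simp add: kspace_diff kspace_smult kspace_kspan_from)
  with c show ?thesis
    by (rule that)
qed

text \<open>\<open>pivots T V\<close> is the set of positions at which the expansion in \<open>T\<close> of some vector of \<open>V\<close>
  starts; as in Gaussian elimination it determines \<open>V\<close> among the subspaces of any larger one.\<close>

definition pivots :: "'r list \<Rightarrow> 'r set \<Rightarrow> nat set" where
  "pivots T V = {i. i < length T \<and> (\<exists>v\<in>V. v \<in> kspan_from T i \<and> v \<notin> kspan_from T (Suc i))}"

lemma kspace_eq_if_pivots_eq: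
  assumes V: "kspace V" and V': "kspace V'" and sub: "V \<subseteq> V'"
    and eq: "pivots T V = pivots T V'"
  shows "V' \<inter> kspan_from T i \<subseteq> V"
proof (induction "length T - i" arbitrary: i)
  case 0
  then show ?case
    using V kspan_from_ge_length[of T i] by (auto simp: kspace_def)
next
  case (Suc n)
  show ?case
  proof
    fix v' assume v': "v' \<in> V' \<inter> kspan_from T i"
    have i: "i < length T"
      using Suc.hyps by simp
    have IH: "V' \<inter> kspan_from T (Suc i) \<subseteq> V"
      using Suc.hyps by (intro Suc.hyps) simp
    show "v' \<in> V"
    proof (cases "v' \<in> kspan_from T (Suc i)")
      case True
      with v' IH show ?thesis by blast
    next
      case False
      with v' i have "i \<in> pivots T V'"
        unfolding pivots_def by blast
      then have "i \<in> pivots T V"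
        using eq by simp
      then obtain v where v: "v \<in> V" "v \<in> kspan_from T i" "v \<notin> kspan_from T (Suc i)"
        unfolding pivots_def by blast
      obtain c where c: "c \<in> G 0" "v' - c * v \<in> kspan_from T (Suc i)"
        using kspan_from_eliminate[OF i v(2,3)] v' by blast
      have "v' - c * v \<in> V'"
        using v' v(1) sub c by (intro kspace_diff[OF V'] kspace_smult[OF V']) auto
      with c IH have "v' - c * v \<in> V"
        by blast
      then have "(v' - c * v) + c * v \<in> V"
        using v(1) c by (intro kspace_add[OF V] kspace_smult[OF V])
      then show ?thesis
        by simp
    qed
  qed
qed

lemma card_pivots_less:
  assumes "kspace V" "kspace V'" "V \<subset> V'" "V' \<subseteq> kspan_from T 0"
  shows "card (pivots T V) < card (pivots T V')"
proof (rule psubset_card_mono)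
  show "finite (pivots T V')"
    unfolding pivots_def by simp
  have "pivots T V \<subseteq> pivots T V'"
    using assms(3) unfolding pivots_def by blast
  moreover have "pivots T V \<noteq> pivots T V'"
    using kspace_eq_if_pivots_eq[OF assms(1,2), of T 0] assms(3,4) by blast
  ultimately show "pivots T V \<subset> pivots T V'"
    by blast
qed

lemma kspace_right_ideal_low_degree:
  assumes "right_ideal I"
  shows "kspace (I \<inter> low_degree d)"
  unfolding kspace_def
proof (intro conjI ballI)
  show "0 \<in> I \<inter> low_degree d"
    using assms by (simp add: right_ideal_def low_degree_def comp_zero)
  show "v + w \<in> I \<inter> low_degree d" if "v \<in> I \<inter> low_degree d" "w \<in> I \<inter> low_degree d" for v w
    using that assms by (simp add: right_ideal_def low_degree_def comp_add)
  show "a * v \<in> I \<inter> low_degree d" if a: "a \<in> G 0" and v: "v \<in> I \<inter> low_degree d" for a v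
  proof -
    have "a * v \<in> I"
      using G0_central[OF a] v assms by (simp add: right_ideal_def)
    moreover have "comp G e (a * v) = 0" if "e > d" for e
      using comp_mult_left[OF a, of e v] v that by (simp add: low_degree_def)
    ultimately show ?thesis
      by (simp add: low_degree_def)
  qed
qed

end

section \<open>Standard algebras: finiteness of \<open>R\<^sub>\<le>\<^sub>d\<close>\<close>

locale fg_standard_k_algebra = graded_k_algebra G for G :: "nat \<Rightarrow> 'r::ring_1 set" +
  fixes gens :: "'r list"
  assumes G_Suc: "G (Suc n) = add_closure {a * b | a b. a \<in> G n \<and> b \<in> G 1}"
    and G_one_gens: "G 1 = {sum_list (map (\<lambda>(c, s). c * s) ps) | ps. set ps \<subseteq> G 0 \<times> set gens}"
begin

fun monomials :: "nat \<Rightarrow> 'r list" where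
  "monomials 0 = [1]"
| "monomials (Suc n) = concat (map (\<lambda>w. map (\<lambda>s. w * s) gens) (monomials n))"

lemma mult_gen_mem_kspan_monomials:
  assumes "a \<in> kspan (monomials n)" "s \<in> set gens"
  shows "a * s \<in> kspan (monomials (Suc n))"
proof -
  obtain c where c: "a = (\<Sum>j\<in>{0..<length (monomials n)}. c j * monomials n ! j)" "\<forall>j. c j \<in> G 0"
    using assms(1) unfolding kspan_from_def by blast
  have "c j * (monomials n ! j * s) \<in> kspan (monomials (Suc n))" if "j < length (monomials n)" for j
  proof (rule kspace_smult[OF kspace_kspan_from])
    show "c j \<in> G 0"
      using c(2) by blast
    show "monomials n ! j * s \<in> kspan (monomials (Suc n))"
      using that assms(2) by (intro kspan_base) force
  qed
  then have "(\<Sum>j\<in>{0..<length (monomials n)}. c j * (monomials n ! j * s))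
      \<in> kspan (monomials (Suc n))"
    by (intro kspace_sum[OF kspace_kspan_from]) auto
  then show ?thesis
    unfolding c(1) by (simp add: sum_distrib_right mult.assoc)
qed

lemma mult_G_one_mem_kspan_monomials:
  assumes a: "a \<in> kspan (monomials n)" and b: "b \<in> G 1"
  shows "a * b \<in> kspan (monomials (Suc n))"
proof -
  obtain ps where ps: "b = (\<Sum>(c, s)\<leftarrow>ps. c * s)" "set ps \<subseteq> G 0 \<times> set gens"
    using b G_one_gens by blast
  have "a * (c * s) \<in> kspan (monomials (Suc n))" if "(c, s) \<in> set ps" for c s
  proof -
    have c: "c \<in> G 0" and s: "s \<in> set gens"
      using that ps(2) by auto
    have "a * (c * s) = c * (a * s)"
      by (simp add: mult.assoc[symmetric] G0_central[OF c, of a])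
    then show ?thesis
      using mult_gen_mem_kspan_monomials[OF a s] c by (simp add: kspace_smult[OF kspace_kspan_from])
  qed
  then have "(\<Sum>(c, s)\<leftarrow>ps. a * (c * s)) \<in> kspan (monomials (Suc n))"
    by (intro kspace_sum_list[OF kspace_kspan_from]) (auto simp del: monomials.simps)
  moreover have "a * b = (\<Sum>(c, s)\<leftarrow>ps. a * (c * s))"
    unfolding ps(1) by (induction ps) (auto simp: distrib_left)
  ultimately show ?thesis
    by simp
qed

lemma G_subset_kspan_monomials: "G n \<subseteq> kspan (monomials n)"
proof (induction n)
  case 0
  show ?case
  proof
    fix x assume "x \<in> G 0"
    then have "x * 1 \<in> kspan (monomials 0)"
      by (intro kspace_smult[OF kspace_kspan_from] kspan_base) auto
    then show "x \<in> kspan (monomials 0)"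
      by simp
  qed
next
  case (Suc n)
  show ?case
  proof
    fix x assume "x \<in> G (Suc n)"
    then obtain xs where x: "x = sum_list xs" and xs: "set xs \<subseteq> {a * b | a b. a \<in> G n \<and> b \<in> G 1}"
      unfolding G_Suc add_closure_def by blast
    have "set xs \<subseteq> kspan (monomials (Suc n))"
      using xs Suc.IH mult_G_one_mem_kspan_monomials by blast
    then show "x \<in> kspan (monomials (Suc n))"
      unfolding x by (rule kspace_sum_list[OF kspace_kspan_from])
  qed
qed

lemma low_degree_subset_kspan: "low_degree d \<subseteq> kspan (concat (map monomials [0..<Suc d]))"
proof
  fix x assume x: "x \<in> low_degree d"
  have "(\<Sum>e\<in>{..d}. comp G e x) = x"
    by (rule sum_comp) (use x in \<open>auto simp: low_degree_def not_le[symmetric]\<close>)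
  moreover have "comp G e x \<in> kspan (concat (map monomials [0..<Suc d]))" if "e \<le> d" for e
  proof -
    have "set (monomials e) \<subseteq> set (concat (map monomials [0..<Suc d]))"
      using that by (force simp del: upt_Suc)
    then show ?thesis
      using G_subset_kspan_monomials comp_in_G kspan_mono by blast
  qed
  ultimately show "x \<in> kspan (concat (map monomials [0..<Suc d]))"
    using kspace_sum[OF kspace_kspan_from] by (metis atMost_iff)
qed

text \<open>The finite-dimensional space \<open>R\<^sub>\<le>\<^sub>d\<close> contains the generators of every ideal with
  \<open>m(I) \<le> d\<close>, so such ideals are determined by their degree \<open>\<le> d\<close> part.\<close>

lemma bounded_mdeg_measure:
  obtains \<mu> :: "'r set \<Rightarrow> nat" where
    "\<And>I J. fg_hom_right_ideal G I \<Longrightarrow> mdeg G I \<le> d \<Longrightarrow> right_ideal J \<Longrightarrow> J \<subset> I \<Longrightarrow> \<mu> J < \<mu> I"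
proof
  let ?T = "concat (map monomials [0..<Suc d])"
  fix I J assume I: "fg_hom_right_ideal G I" "mdeg G I \<le> d" and J: "right_ideal J" "J \<subset> I"
  have RI: "right_ideal I"
    using I(1) unfolding fg_hom_right_ideal_def hom_right_ideal_def by blast
  obtain X where X: "rideal_gen X = I" "X \<subseteq> low_degree (mdeg G I)"
    using fg_hom_right_ideal_generated_in_low_degree[OF I(1)] .
  have "X \<subseteq> low_degree d"
    using X(2) I(2) unfolding low_degree_def by auto
  moreover have "X \<subseteq> I"
    using X(1) rideal_gen_base by blast
  ultimately have "J \<inter> low_degree d \<noteq> I \<inter> low_degree d"
    using J rideal_gen_minimal[OF J(1), of X] X(1) by blast
  then show "card (pivots ?T (J \<inter> low_degree d)) < card (pivots ?T (I \<inter> low_degree d))"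
    using J(2) low_degree_subset_kspan
    by (intro card_pivots_less kspace_right_ideal_low_degree RI J(1)) auto
qed

section \<open>Kernels of homogeneous matrices\<close>

lemma hom_fin_gen_syzygies:
  assumes F: "\<exists>d0. \<forall>d\<ge>d0. rate_filtration G {I. fg_hom_right_ideal G I \<and> mdeg G I \<le> d}"
    and h: "\<forall>i<t. h i \<in> Gz G (c i)"
  shows "hom_fin_gen (syzygies t h) c"
proof -
  define I where "I = rideal_gen (h ` {..<t})"
  have I: "fg_hom_right_ideal G I"
    unfolding I_def using h by (rule fg_hom_right_ideal_rideal_gen_tuple)
  obtain d0 where d0: "\<forall>d\<ge>d0. rate_filtration G {I. fg_hom_right_ideal G I \<and> mdeg G I \<le> d}"
    using F by blast
  define d where "d = max d0 (mdeg G I)"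
  define F where "F = {I. fg_hom_right_ideal G I \<and> mdeg G I \<le> d}"
  obtain \<mu> :: "'r set \<Rightarrow> nat" where
    \<mu>: "\<And>I J. fg_hom_right_ideal G I \<Longrightarrow> mdeg G I \<le> d \<Longrightarrow> right_ideal J \<Longrightarrow> J \<subset> I \<Longrightarrow> \<mu> J < \<mu> I"
    using bounded_mdeg_measure[of d] by metis
  have "rate_filtration G F"
    using d0 by (simp add: F_def d_def)
  moreover have "\<mu> J < \<mu> K" if "K \<in> F" "J \<in> F" "J \<subset> K" for J K
    using that by (intro \<mu>) (auto simp: F_def fg_hom_right_ideal_def hom_right_ideal_def)
  moreover have "I \<in> F"
    using I by (simp add: F_def d_def)
  ultimately have "syzygies_fin_gen I"
    by (rule syzygies_fin_gen_filtration)
  then show ?thesis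
    using h unfolding syzygies_fin_gen_def I_def by blast
qed

lemma hom_fin_gen_kernel_rows_Suc:
  assumes F: "\<exists>d0. \<forall>d\<ge>d0. rate_filtration G {I. fg_hom_right_ideal G I \<and> mdeg G I \<le> d}"
    and M: "\<forall>i<n. M m i \<in> Gz G (a i - b m + e)" and ker: "hom_fin_gen (kernel_rows n M m) a"
  shows "hom_fin_gen (kernel_rows n M (Suc m)) a"
proof -
  obtain ws where ws: "generates (kernel_rows n M m) ws"
    and ws_hom: "\<forall>w\<in>set ws. homogeneous_vec a w"
    using ker unfolding hom_fin_gen_def by blast
  have "\<exists>\<delta>. \<forall>i. (ws ! l) i \<in> Gz G (\<delta> - a i)" if "l < length ws" for l
    using ws_hom that nth_mem unfolding homogeneous_vec_def by blast
  then have "\<forall>l. \<exists>\<delta>. l < length ws \<longrightarrow> (\<forall>i. (ws ! l) i \<in> Gz G (\<delta> - a i))"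
    by blast
  from choice[OF this] obtain \<delta> where \<delta>: "\<And>l i. l < length ws \<Longrightarrow> (ws ! l) i \<in> Gz G (\<delta> l - a i)"
    by blast
  define h where "h l = (\<Sum>i<n. M m i * (ws ! l) i)" for l
  have "h l \<in> Gz G (\<delta> l + (e - b m))" if "l < length ws" for l
    unfolding h_def
  proof (rule Gz_sum)
    fix i assume "i \<in> {..<n}"
    then have "M m i * (ws ! l) i \<in> Gz G ((a i - b m + e) + (\<delta> l - a i))"
      using M \<delta>[OF that] by (intro Gz_mult) auto
    then show "M m i * (ws ! l) i \<in> Gz G (\<delta> l + (e - b m))"
      by (simp add: algebra_simps)
  qed
  then have "hom_fin_gen (syzygies (length ws) h) (\<lambda>l. \<delta> l + (e - b m))"
    by (intro hom_fin_gen_syzygies[OF F]) auto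
  then obtain us where us: "generates (syzygies (length ws) h) us"
    and us_hom: "\<forall>u\<in>set us. homogeneous_vec \<delta> u"
    unfolding hom_fin_gen_def homogeneous_vec_shift by blast
  have "generates (kernel_rows n M (Suc m)) (map (lin_comb ws) us)"
    using ws us unfolding h_def by (rule generates_kernel_rows_Suc)
  moreover have "homogeneous_vec a (lin_comb ws u)" if "u \<in> set us" for u
    using \<delta> us_hom that by (intro homogeneous_vec_lin_comb) auto
  ultimately show ?thesis
    unfolding hom_fin_gen_def by (intro exI[of _ "map (lin_comb ws) us"]) auto
qed

lemma hom_fin_gen_kernel_rows:
  assumes F: "\<exists>d0. \<forall>d\<ge>d0. rate_filtration G {I. fg_hom_right_ideal G I \<and> mdeg G I \<le> d}"
  shows "\<forall>j<m. \<forall>i<n. M j i \<in> Gz G (a i - b j + e) \<Longrightarrow> hom_fin_gen (kernel_rows n M m) a"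
proof (induction m)
  case 0
  have "kernel_rows n M 0 = syzygies n (\<lambda>_. 0)"
    by (auto simp: kernel_rows_def syzygies_def)
  then show ?case
    using hom_fin_gen_syzygies_zero[of n "\<lambda>_. 0" a] by simp
next
  case (Suc m)
  then show ?case
    by (intro hom_fin_gen_kernel_rows_Suc[OF F]) auto
qed

lemma projective_coherent:
  assumes "\<exists>d0. \<forall>d\<ge>d0. rate_filtration G {I. fg_hom_right_ideal G I \<and> mdeg G I \<le> d}"
  shows "projective_coherent G"
  unfolding projective_coherent_def Let_def kernel_rows_def[symmetric]
proof (intro allI impI)
  fix n m :: nat and a b :: "nat \<Rightarrow> int" and e :: int and M :: "nat \<Rightarrow> nat \<Rightarrow> 'r"
  assume "\<forall>j<m. \<forall>i<n. M j i \<in> Gz G (a i - b j + e)"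
  then obtain ws where "generates (kernel_rows n M m) ws"
    using hom_fin_gen_kernel_rows[OF assms] unfolding hom_fin_gen_def by blast
  then show "\<exists>ws. set ws \<subseteq> kernel_rows n M m \<and>
      kernel_rows n M m = {(\<lambda>i. \<Sum>k<length ws. (ws ! k) i * r k) | r. True}"
    unfolding generates_def right_span_def lin_comb_def full_SetCompr_eq by blast
qed

end

lemma fg_standard_algebra_obtains_gens:
  assumes "fg_standard_algebra G"
  obtains gens where "fg_standard_k_algebra G gens"
proof -
  obtain S where "finite S"
    and G_one: "G 1 = {sum_list (map (\<lambda>(c, s). c * s) ps) | ps. set ps \<subseteq> G 0 \<times> S}"
    using assms unfolding fg_standard_algebra_def by blast
  then obtain gens where "set gens = S"
    using finite_list by blast
  have std: "standard_algebra G"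
    using assms unfolding fg_standard_algebra_def by blast
  show ?thesis
  proof (rule that, unfold_locales)
    show "is_grading G"
      using std unfolding standard_algebra_def by blast
    show "a * x = x * a" if "a \<in> G 0" for a x
      using std that unfolding standard_algebra_def by blast
    show "\<exists>b\<in>G 0. a * b = 1" if "a \<in> G 0" "a \<noteq> 0" for a
      using std that unfolding standard_algebra_def by blast
    show "G (Suc n) = add_closure {a * b | a b. a \<in> G n \<and> b \<in> G 1}" for n
      using std unfolding standard_algebra_def by blast
    show "G 1 = {sum_list (map (\<lambda>(c, s). c * s) ps) | ps. set ps \<subseteq> G 0 \<times> set gens}"
      using G_one \<open>set gens = S\<close> by simp
  qed
qed

theorem mainTheorem14:
  fixes G :: "nat \<Rightarrow> 'r::ring_1 set"
  assumes "fg_standard_algebra G"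
    and "\<exists>d0. \<forall>d\<ge>d0. rate_filtration G {I. fg_hom_right_ideal G I \<and> mdeg G I \<le> d}"
  shows "projective_coherent G"
proof -
  obtain gens where "fg_standard_k_algebra G gens"
    using fg_standard_algebra_obtains_gens[OF assms(1)] by blast
  then show ?thesis
    using assms(2) by (rule fg_standard_k_algebra.projective_coherent)
qed

end
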